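(* Let $p$ be a prime, $q=p^f$ with $f\ge 1$, $m\ge 2$ an integer, and $\omega$ a primitive element of $\mathbb{F}_{q^m}$. Let $N$ be a positive integer dividing $q^m-1$, and let $C_0^{(N,q^m)}=\langle \omega^N\rangle$ be the subgroup of index $N$ of $\mathbb{F}_{q^m}^\ast$. Assume that $\mathbb{F}_q^\ast\le C_0^{(N,q^m)}\le \mathbb{F}_{q^m}^\ast$ and that the Cayley graph $\mathrm{Cay}(\mathbb{F}_{q^m},C_0^{(N,q^m)})$ is strongly regular. Let $I\subseteq\{0,1,\dots,N-1\}$ be the subdifference set defined below, and let $$H=\{(y,\,y^{-1}x\omega^\ell)\mid x\in C_0^{(N,q^m)},\ y\in \mathbb{F}_{q^m}^\ast,\ \ell\in I\}\subseteq \mathbb{F}_{q^m}\times\mathbb{F}_{q^m}.$$ Then $\mathrm{Cay}(\mathbb{F}_{q^m}\times\mathbb{F}_{q^m},H)$ is a strongly regular graph with parameters $(n^2,\,r(n-1),\,n+r^2-3r,\,r^2-r)$, where $n=q^m$ and $r=(q^m-1)|I|/N$.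
   Context: For an additive group $G$ and $D\subseteq G$ with $0\notin D$, $-D=D$, $\mathrm{Cay}(G,D)$ is the graph on $G$ in which $x,y$ are adjacent iff $x-y\in D$. A strongly regular graph with parameters $(v,k,\lambda,\mu)$ is a $k$-regular graph on $v$ vertices, neither complete nor edgeless, in which adjacent vertices have $\lambda$ common neighbours and non-adjacent vertices have $\mu$ common neighbours. Subdifference set: for $0\le i\le N-1$ let $C_i^{(N,q^m)}=\omega^i C_0^{(N,q^m)}$ and let $n_i=|\{x\in C_i^{(N,q^m)}:\mathrm{Tr}_{q^m/q}(x)=0\}|/(q-1)$ (the number of points of the hyperplane $\mathrm{Tr}_{q^m/q}(x)=0$ of $\mathrm{PG}(m-1,q)$ lying in the coset $C_i^{(N,q^m)}/\mathbb{F}_q^\ast$). Under the hypotheses the numbers $n_i$ take exactly two distinct values, so $n_i-n_0\in\{0,\delta\}$ for a fixed nonzero integer $\delta$; then $I=\{0\le i\le N-1: n_i-n_0=\delta\}$. *)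

theory Defs
  imports Main "HOL-Library.Product_Plus" "HOL-Computational_Algebra.Primes"
begin

definition cayley_adj :: "'g::ab_group_add set \<Rightarrow> 'g \<Rightarrow> 'g \<Rightarrow> bool" where
  "cayley_adj D x y \<longleftrightarrow> x - y \<in> D"

definition srg :: "'v set \<Rightarrow> ('v \<Rightarrow> 'v \<Rightarrow> bool) \<Rightarrow> int \<Rightarrow> int \<Rightarrow> int \<Rightarrow> int \<Rightarrow> bool" where
  "srg V E v k l u \<longleftrightarrow>
     finite V \<and> int (card V) = v \<and>
     (\<forall>x\<in>V. \<forall>y\<in>V. E x y \<longrightarrow> E y x) \<and> (\<forall>x\<in>V. \<not> E x x) \<and>
     (\<forall>x\<in>V. int (card {y\<in>V. E x y}) = k) \<and>
     (\<forall>x\<in>V. \<forall>y\<in>V. x \<noteq> y \<and> E x y \<longrightarrow> int (card {z\<in>V. E x z \<and> E y z}) = l) \<and>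
     (\<forall>x\<in>V. \<forall>y\<in>V. x \<noteq> y \<and> \<not> E x y \<longrightarrow> int (card {z\<in>V. E x z \<and> E y z}) = u) \<and>
     (\<exists>x\<in>V. \<exists>y\<in>V. x \<noteq> y \<and> E x y) \<and>
     (\<exists>x\<in>V. \<exists>y\<in>V. x \<noteq> y \<and> \<not> E x y)"

definition is_srg :: "'v set \<Rightarrow> ('v \<Rightarrow> 'v \<Rightarrow> bool) \<Rightarrow> bool" where
  "is_srg V E \<longleftrightarrow> (\<exists>v k l u. srg V E v k l u)"

definition primitive_elem :: "'a::field \<Rightarrow> bool" where
  "primitive_elem w \<longleftrightarrow> (\<forall>x. x \<noteq> 0 \<longrightarrow> (\<exists>k::nat. x = w ^ k))"

definition Fq_star :: "nat \<Rightarrow> 'a::field set" where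
  "Fq_star q = {x. x \<noteq> 0 \<and> x ^ q = x}"

definition cyclo_C0 :: "nat \<Rightarrow> 'a::field \<Rightarrow> 'a set" where
  "cyclo_C0 N w = {w ^ (N * k) | k. True}"

definition cyclo_C :: "nat \<Rightarrow> 'a::field \<Rightarrow> nat \<Rightarrow> 'a set" where
  "cyclo_C N w i = (\<lambda>x. w ^ i * x) ` cyclo_C0 N w"

definition trace_rel :: "nat \<Rightarrow> nat \<Rightarrow> 'a::field \<Rightarrow> 'a" where
  "trace_rel q m x = (\<Sum>i<m. x ^ (q ^ i))"

definition sub_n :: "nat \<Rightarrow> nat \<Rightarrow> nat \<Rightarrow> 'a::field \<Rightarrow> nat \<Rightarrow> int" where
  "sub_n q m N w i = int (card {x \<in> cyclo_C N w i. trace_rel q m x = 0} div (q - 1))"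

definition subdiff_delta :: "nat \<Rightarrow> nat \<Rightarrow> nat \<Rightarrow> 'a::field \<Rightarrow> int" where
  "subdiff_delta q m N w =
     (THE d. d \<noteq> 0 \<and> (\<exists>i<N. sub_n q m N w i - sub_n q m N w 0 = d))"

definition subdiff_set :: "nat \<Rightarrow> nat \<Rightarrow> nat \<Rightarrow> 'a::field \<Rightarrow> nat set" where
  "subdiff_set q m N w =
     {i. i < N \<and> sub_n q m N w i - sub_n q m N w 0 = subdiff_delta q m N w}"

end

theory Submission
  imports Defs "HOL-Library.Indicator_Function" "HOL-Computational_Algebra.Polynomial"
begin

(*
  Characters are replaced by hyperplane sums: for a function f on a finite F_q-space with a
  nondegenerate symmetric form B, let f^(w) be the sum of f over the hyperplane B(-, w) = 0.
  If f is invariant under the scalars F_q^*, then f^ determines f, and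
  (f * g)^ = f^ g^ + (sum f - f^) (sum g - g^) / (q - 1).

  On F = F_{q^m} with B(x, y) = Tr(x y), the hyperplane sums of the indicator of C_0 are the
  counts h(a) = #{x in C_0. Tr(x a) = 0}. Strong regularity of Cay(F, C_0) expresses
  1_{C_0} * 1_{C_0} through the point mass at 0, 1_{C_0} and 1, so h(a) satisfies a quadratic
  equation and takes exactly two values h_0 = h(1) and h_1 on F^*. The set D where h = h_1 is the
  union of the cosets w^l C_0 with l in I, and H = {(y, z). y z in D}. On F x F with the form
  Tr(y a + z b), counting gives q 1_H^(a, b) = (n - 1) r + (q - 1) (n [a b in D] - r) for
  (a, b) != 0, and the convolution identity turns this into
  1_H * 1_H = ((n - 1) r - mu) [v = 0] + (lambda - mu) 1_H + mu, i.e. the claimed parameters.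
*)

section \<open>Hyperplane sums on a finite space with a nondegenerate form\<close>

lemma card_UNIV_eq_sum_card_fibres:
  fixes g :: "'v::finite \<Rightarrow> 'b"
  assumes "finite T" "\<And>v. g v \<in> T"
  shows "card (UNIV :: 'v set) = (\<Sum>t\<in>T. card {v. g v = t})"
  using sum.group[of "UNIV :: 'v set" T g "\<lambda>_. 1::nat"] assms by (auto simp: image_subset_iff)

locale nondegenerate_form_space =
  fixes K :: "'a::field set" and q :: nat
    and scale :: "'a \<Rightarrow> 'v::{ab_group_add,finite} \<Rightarrow> 'v"
    and B :: "'v \<Rightarrow> 'v \<Rightarrow> 'a"
  assumes zero_in_K: "0 \<in> K" and one_in_K: "1 \<in> K"
    and uminus_in_K: "a \<in> K \<Longrightarrow> - a \<in> K"
    and inverse_in_K: "a \<in> K \<Longrightarrow> inverse a \<in> K"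
    and finite_K: "finite K" and card_K: "card K = q"
    and scale_add_left: "scale (a + b) v = scale a v + scale b v"
    and scale_add_right: "scale a (v + w) = scale a v + scale a w"
    and scale_scale: "scale a (scale b v) = scale (a * b) v"
    and scale_one: "scale 1 v = v"
    and B_add: "B (v + w) u = B v u + B w u"
    and B_scale: "a \<in> K \<Longrightarrow> B (scale a v) u = a * B v u"
    and B_sym: "B v u = B u v"
    and B_in_K: "B v u \<in> K"
    and B_nondegenerate: "(\<And>u. B v u = 0) \<Longrightarrow> v = 0"
begin

lemma q_ge_2: "q \<ge> 2"
proof -
  have "{0, 1} \<subseteq> K" using zero_in_K one_in_K by simp
  then have "card {0, 1 :: 'a} \<le> q" using card_mono[OF finite_K] card_K by metis
  then show ?thesis by simp
qed

lemma scale_zero_left [simp]: "scale 0 v = 0"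
  using scale_add_left[of 0 0 v] by simp

lemma scale_zero_right [simp]: "scale a 0 = 0"
  using scale_add_right[of a 0 0] by simp

lemma scale_inverse_scale [simp]: "a \<noteq> 0 \<Longrightarrow> scale (inverse a) (scale a v) = v"
  by (simp add: scale_scale scale_one)

lemma scale_scale_inverse [simp]: "a \<noteq> 0 \<Longrightarrow> scale a (scale (inverse a) v) = v"
  by (simp add: scale_scale scale_one)

lemma scale_eq_0_iff: "scale a v = 0 \<longleftrightarrow> a = 0 \<or> v = 0"
  by (metis scale_inverse_scale scale_zero_left scale_zero_right)

lemma B_zero_left [simp]: "B 0 u = 0"
  using B_add[of 0 0 u] by (metis add.right_neutral add_left_cancel)

lemma B_zero_right [simp]: "B u 0 = 0"
  using B_sym B_zero_left by metis

lemma B_diff: "B (v - w) u = B v u - B w u"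
  using B_add[of "v - w" w u] by simp

lemma exists_B_eq_1: assumes "w \<noteq> 0" shows "\<exists>v. B v w = 1"
proof -
  obtain u where u: "B u w \<noteq> 0" using B_nondegenerate B_sym assms by metis
  then have "B (scale (inverse (B u w)) u) w = 1" using B_in_K inverse_in_K by (simp add: B_scale)
  then show ?thesis by blast
qed

lemma exists_B_eq_1_0:
  assumes "\<not> (\<exists>t\<in>K. w1 = scale t w2)" "w2 \<noteq> 0"
  shows "\<exists>v. B v w1 = 1 \<and> B v w2 = 0"
proof (rule ccontr)
  assume nex: "\<not> (\<exists>v. B v w1 = 1 \<and> B v w2 = 0)"
  have perp: "B v w1 = 0" if "B v w2 = 0" for v
  proof (rule ccontr)
    assume ne: "B v w1 \<noteq> 0"
    have "B (scale (inverse (B v w1)) v) w1 = 1" "B (scale (inverse (B v w1)) v) w2 = 0"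
      using ne that B_in_K inverse_in_K by (simp_all add: B_scale)
    then show False using nex by blast
  qed
  obtain v0 where v0: "B v0 w2 = 1" using exists_B_eq_1 assms by blast
  define t where "t = B v0 w1"
  have t: "t \<in> K" using B_in_K t_def by auto
  have "B v (w1 - scale t w2) = 0" for v
  proof -
    have "B (v - scale (B v w2) v0) w2 = 0" using v0 B_in_K by (simp add: B_diff B_scale)
    then have "B (v - scale (B v w2) v0) w1 = 0" by (rule perp)
    then have "B v w1 = B v w2 * t" using B_in_K by (simp add: B_diff B_scale t_def)
    then show ?thesis using t
      by (simp add: B_diff B_scale B_sym[of v] B_sym[of "_ - _"] mult.commute)
  qed
  then have "w1 = scale t w2" using B_nondegenerate B_sym by (metis eq_iff_diff_eq_0)
  then show False using assms t by auto
qed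

lemma card_level_set:
  assumes "w \<noteq> 0" "c \<in> K"
  shows "card {v. B v w = c} * q = card (UNIV :: 'v set)"
proof -
  obtain v0 where v0: "B v0 w = 1" using exists_B_eq_1 assms by blast
  have translate: "card {v. B v w = c} = card {v. B v w = 0}" if "c \<in> K" for c
  proof -
    have "{v. B v w = c} = (\<lambda>v. v + scale c v0) ` {v. B v w = 0}"
    proof (rule set_eqI, rule iffI)
      fix x assume "x \<in> {v. B v w = c}"
      then have "x - scale c v0 \<in> {v. B v w = 0}" using that v0 by (simp add: B_diff B_scale)
      then show "x \<in> (\<lambda>v. v + scale c v0) ` {v. B v w = 0}" by force
    qed (use that v0 in \<open>auto simp: B_add B_scale\<close>)
    then show ?thesis by (simp add: card_image)
  qed
  have "card (UNIV :: 'v set) = (\<Sum>t\<in>K. card {v. B v w = t})"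
    by (rule card_UNIV_eq_sum_card_fibres) (use finite_K B_in_K in auto)
  also have "\<dots> = q * card {v. B v w = 0}" using translate card_K by simp
  finally show ?thesis using translate[OF assms(2)] by simp
qed

lemma card_level_set2:
  assumes indep: "\<not> (\<exists>t\<in>K. w1 = scale t w2)" "\<not> (\<exists>t\<in>K. w2 = scale t w1)"
    and c: "c1 \<in> K" "c2 \<in> K"
  shows "card {v. B v w1 = c1 \<and> B v w2 = c2} * q^2 = card (UNIV :: 'v set)"
proof -
  have "w1 \<noteq> 0" "w2 \<noteq> 0" using indep zero_in_K by force+
  then obtain v1 v2 where v1: "B v1 w1 = 1" "B v1 w2 = 0" and v2: "B v2 w2 = 1" "B v2 w1 = 0"
    using exists_B_eq_1_0 indep by metis
  have translate: "card {v. (B v w1, B v w2) = (a, b)} = card {v. B v w1 = 0 \<and> B v w2 = 0}"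
    if "a \<in> K" "b \<in> K" for a b
  proof -
    have "{v. (B v w1, B v w2) = (a, b)} =
        (\<lambda>v. v + (scale a v1 + scale b v2)) ` {v. B v w1 = 0 \<and> B v w2 = 0}"
    proof (rule set_eqI, rule iffI)
      fix x assume "x \<in> {v. (B v w1, B v w2) = (a, b)}"
      then have "x - (scale a v1 + scale b v2) \<in> {v. B v w1 = 0 \<and> B v w2 = 0}"
        using that v1 v2 by (simp add: B_diff B_add B_scale)
      then show "x \<in> (\<lambda>v. v + (scale a v1 + scale b v2)) ` {v. B v w1 = 0 \<and> B v w2 = 0}" by force
    qed (use that v1 v2 in \<open>auto simp: B_add B_scale\<close>)
    then show ?thesis by (simp add: card_image)
  qed
  have "card (UNIV :: 'v set) = (\<Sum>t\<in>K \<times> K. card {v. (B v w1, B v w2) = t})"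
    by (rule card_UNIV_eq_sum_card_fibres) (use finite_K B_in_K in auto)
  also have "\<dots> = (\<Sum>t\<in>K \<times> K. card {v. B v w1 = 0 \<and> B v w2 = 0})"
    by (rule sum.cong) (use translate in auto)
  also have "\<dots> = q^2 * card {v. B v w1 = 0 \<and> B v w2 = 0}"
    using card_K finite_K by (simp add: card_cartesian_product power2_eq_square)
  finally show ?thesis using translate[OF c] by simp
qed

lemma card_level_set_real:
  assumes "w \<noteq> 0" "c \<in> K"
  shows "real (card {v. B v w = c}) = real (card (UNIV :: 'v set)) / real q"
  using card_level_set[OF assms] q_ge_2 by (simp add: field_simps flip: of_nat_mult)

lemma card_Diff_0_K: "real (card (K - {0})) = real q - 1"
  using finite_K zero_in_K card_K q_ge_2 by (simp add: card_Diff_singleton of_nat_diff)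

definition hyperplane_sum :: "('v \<Rightarrow> real) \<Rightarrow> 'v \<Rightarrow> real" where
  "hyperplane_sum f w = (\<Sum>v\<in>UNIV. f v * of_bool (B v w = 0))"

definition level_sum :: "('v \<Rightarrow> real) \<Rightarrow> 'v \<Rightarrow> 'a \<Rightarrow> real" where
  "level_sum f w c = (\<Sum>v\<in>UNIV. f v * of_bool (B v w = c))"

definition convolution :: "('v \<Rightarrow> real) \<Rightarrow> ('v \<Rightarrow> real) \<Rightarrow> 'v \<Rightarrow> real" where
  "convolution f g u = (\<Sum>v\<in>UNIV. f v * g (u - v))"

definition scale_invariant :: "('v \<Rightarrow> real) \<Rightarrow> bool" where
  "scale_invariant f \<longleftrightarrow> (\<forall>a\<in>K - {0}. \<forall>v. f (scale a v) = f v)"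

lemma level_sum_0: "level_sum f w 0 = hyperplane_sum f w"
  by (simp add: hyperplane_sum_def level_sum_def)

lemma hyperplane_sum_at_0: "hyperplane_sum f 0 = sum f UNIV"
  by (simp add: hyperplane_sum_def)

lemma level_sum_scale_invariant:
  assumes "scale_invariant f" "c \<in> K - {0}"
  shows "level_sum f w c = level_sum f w 1"
  unfolding level_sum_def
proof (rule sum.reindex_bij_witness[of _ "scale c" "scale (inverse c)"])
  fix v
  have c: "c \<noteq> 0" "c \<in> K" "inverse c \<in> K" using assms(2) inverse_in_K by auto
  then have "f (scale (inverse c) v) = f v" using assms(1) unfolding scale_invariant_def by simp
  moreover have "B (scale (inverse c) v) w = 1 \<longleftrightarrow> B v w = c" using c by (auto simp: B_scale field_simps)
  ultimately show "f (scale (inverse c) v) * of_bool (B (scale (inverse c) v) w = 1) = f v * of_bool (B v w = c)"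
    by simp
qed (use assms(2) in auto)

lemma sum_level_sums: "(\<Sum>c\<in>K. level_sum f w c) = sum f UNIV"
proof -
  have "(\<Sum>c\<in>K. level_sum f w c) = (\<Sum>c\<in>K. \<Sum>v\<in>{x. B x w = c}. f v)"
    unfolding level_sum_def by (rule sum.cong) (auto intro: sum.mono_neutral_cong_right)
  also have "\<dots> = sum f UNIV"
    using sum.group[of "UNIV :: 'v set" K "\<lambda>v. B v w" f] finite_K B_in_K by (auto simp: image_subset_iff)
  finally show ?thesis .
qed

lemma level_sum_1:
  assumes "scale_invariant f"
  shows "level_sum f w 1 = (sum f UNIV - hyperplane_sum f w) / (real q - 1)"
proof -
  have "sum f UNIV = (\<Sum>c\<in>K. level_sum f w c)" by (rule sum_level_sums[symmetric])
  also have "\<dots> = level_sum f w 0 + (\<Sum>c\<in>K - {0}. level_sum f w c)"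
    using finite_K zero_in_K by (rule sum.remove)
  also have "(\<Sum>c\<in>K - {0}. level_sum f w c) = (real q - 1) * level_sum f w 1"
    using level_sum_scale_invariant[OF assms] card_Diff_0_K by simp
  finally show ?thesis using q_ge_2 by (simp add: level_sum_0 field_simps)
qed

lemma hyperplane_sum_convolution_eq_sum_level_sums:
  "hyperplane_sum (convolution f g) w = (\<Sum>c\<in>K. level_sum f w c * level_sum g w (- c))"
proof -
  have inner: "(\<Sum>u\<in>UNIV. f v * g (u - v) * of_bool (B u w = 0)) = f v * level_sum g w (- B v w)" for v
  proof -
    have "(\<Sum>u\<in>UNIV. f v * g (u - v) * of_bool (B u w = 0))
        = (\<Sum>u\<in>UNIV. f v * (g u * of_bool (B u w = - B v w)))"
    proof (rule sum.reindex_bij_witness[of _ "\<lambda>u. u + v" "\<lambda>u. u - v"])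
      fix u
      have "B (u - v) w = - B v w \<longleftrightarrow> B u w = 0" by (auto simp: B_diff)
      then show "f v * (g (u - v) * of_bool (B (u - v) w = - B v w)) = f v * g (u - v) * of_bool (B u w = 0)"
        by simp
    qed auto
    then show ?thesis by (simp only: level_sum_def sum_distrib_left)
  qed
  have "hyperplane_sum (convolution f g) w = (\<Sum>v\<in>UNIV. \<Sum>u\<in>UNIV. f v * g (u - v) * of_bool (B u w = 0))"
    unfolding hyperplane_sum_def convolution_def sum_distrib_right by (rule sum.swap)
  also have "\<dots> = (\<Sum>v\<in>UNIV. f v * level_sum g w (- B v w))"
    using inner by simp
  also have "\<dots> = (\<Sum>c\<in>K. \<Sum>v\<in>{x. B x w = c}. f v * level_sum g w (- B v w))"
    using sum.group[of "UNIV :: 'v set" K "\<lambda>v. B v w" "\<lambda>v. f v * level_sum g w (- B v w)"] finite_K B_in_K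
    by (auto simp: image_subset_iff)
  also have "\<dots> = (\<Sum>c\<in>K. level_sum f w c * level_sum g w (- c))"
  proof (rule sum.cong[OF refl])
    fix c
    have "(\<Sum>v\<in>{x. B x w = c}. f v * level_sum g w (- B v w)) = (\<Sum>v\<in>{x. B x w = c}. f v) * level_sum g w (- c)"
      by (simp add: sum_distrib_right)
    also have "(\<Sum>v\<in>{x. B x w = c}. f v) = level_sum f w c"
      unfolding level_sum_def by (rule sum.mono_neutral_cong_left) auto
    finally show "(\<Sum>v\<in>{x. B x w = c}. f v * level_sum g w (- B v w)) = level_sum f w c * level_sum g w (- c)" .
  qed
  finally show ?thesis .
qed

lemma hyperplane_sum_convolution:
  assumes f: "scale_invariant f" and g: "scale_invariant g"
  shows "hyperplane_sum (convolution f g) w = hyperplane_sum f w * hyperplane_sum g w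
     + (sum f UNIV - hyperplane_sum f w) * (sum g UNIV - hyperplane_sum g w) / (real q - 1)"
proof -
  have "(\<Sum>c\<in>K - {0}. level_sum f w c * level_sum g w (- c)) = (real q - 1) * (level_sum f w 1 * level_sum g w 1)"
  proof -
    have "c \<in> K - {0} \<Longrightarrow> - c \<in> K - {0}" for c using uminus_in_K by auto
    then show ?thesis using level_sum_scale_invariant[OF f] level_sum_scale_invariant[OF g] card_Diff_0_K
      by simp
  qed
  then have "hyperplane_sum (convolution f g) w = hyperplane_sum f w * hyperplane_sum g w
      + (real q - 1) * (level_sum f w 1 * level_sum g w 1)"
    using finite_K zero_in_K by (simp add: hyperplane_sum_convolution_eq_sum_level_sums sum.remove level_sum_0)
  moreover have "Q * (a / Q * (b / Q)) = a * b / Q" if "Q \<noteq> 0" for Q a b :: real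
    using that by (simp add: field_simps power2_eq_square)
  moreover have "real q - 1 \<noteq> 0" using q_ge_2 by simp
  ultimately show ?thesis by (simp add: level_sum_1[OF f] level_sum_1[OF g])
qed

lemma hyperplane_sum_add: "hyperplane_sum (\<lambda>v. f v + g v) w = hyperplane_sum f w + hyperplane_sum g w"
  by (simp add: hyperplane_sum_def sum.distrib distrib_right)

lemma hyperplane_sum_cmult: "hyperplane_sum (\<lambda>v. c * f v) w = c * hyperplane_sum f w"
  unfolding hyperplane_sum_def sum_distrib_left by (simp only: mult.assoc)

lemma hyperplane_sum_linear3:
  "hyperplane_sum (\<lambda>v. a * f1 v + b * f2 v + c * f3 v) w
    = a * hyperplane_sum f1 w + b * hyperplane_sum f2 w + c * hyperplane_sum f3 w"
  by (simp only: hyperplane_sum_add hyperplane_sum_cmult)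

lemma hyperplane_sum_delta: "hyperplane_sum (\<lambda>v. of_bool (v = 0)) w = 1"
proof -
  have "{v. v = 0 \<and> B v w = 0} = {0}" by auto
  then show ?thesis by (simp add: hyperplane_sum_def Int_def)
qed

lemma hyperplane_sum_1:
  "hyperplane_sum (\<lambda>v. 1) w = (if w = 0 then real (card (UNIV :: 'v set)) else real (card (UNIV :: 'v set)) / real q)"
  using card_level_set_real[OF _ zero_in_K, of w] by (simp add: hyperplane_sum_def Int_def)

lemma scale_invariant_add: "scale_invariant f \<Longrightarrow> scale_invariant g \<Longrightarrow> scale_invariant (\<lambda>v. f v + g v)"
  by (simp add: scale_invariant_def)

lemma scale_invariant_cmult: "scale_invariant f \<Longrightarrow> scale_invariant (\<lambda>v. c * f v)"
  by (simp add: scale_invariant_def)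

lemma scale_invariant_const: "scale_invariant (\<lambda>v. c)"
  by (simp add: scale_invariant_def)

lemma scale_invariant_delta: "scale_invariant (\<lambda>v. of_bool (v = 0))"
  by (auto simp: scale_invariant_def scale_eq_0_iff)

lemma scale_invariant_convolution:
  assumes f: "scale_invariant f" and g: "scale_invariant g"
  shows "scale_invariant (convolution f g)"
  unfolding scale_invariant_def
proof (intro ballI allI)
  fix a v assume a: "a \<in> K - {0}"
  then have ai: "inverse a \<in> K - {0}" using inverse_in_K by auto
  show "convolution f g (scale a v) = convolution f g v"
    unfolding convolution_def
  proof (rule sum.reindex_bij_witness[of _ "scale a" "scale (inverse a)"])
    fix x
    have "v - scale (inverse a) x = scale (inverse a) (scale a v - x)"
      using a by (metis DiffD2 add_diff_cancel diff_add_cancel scale_add_right scale_inverse_scale singletonI)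
    then show "f (scale (inverse a) x) * g (v - scale (inverse a) x) = f x * g (scale a v - x)"
      using f g ai unfolding scale_invariant_def by simp
  qed (use a in auto)
qed

lemma sum_hyperplane_sums:
  "(\<Sum>w\<in>UNIV. hyperplane_sum f w * of_bool (B u w = 0))
    = (\<Sum>v\<in>UNIV. f v * real (card {w. B v w = 0 \<and> B u w = 0}))"
proof -
  have "(\<Sum>w\<in>UNIV. hyperplane_sum f w * of_bool (B u w = 0))
      = (\<Sum>w\<in>UNIV. \<Sum>v\<in>UNIV. f v * of_bool (B v w = 0 \<and> B u w = 0))"
    unfolding hyperplane_sum_def sum_distrib_right by (rule sum.cong) (auto intro!: sum.cong)
  also have "\<dots> = (\<Sum>v\<in>UNIV. \<Sum>w\<in>UNIV. f v * of_bool (B v w = 0 \<and> B u w = 0))" by (rule sum.swap)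
  also have "\<dots> = (\<Sum>v\<in>UNIV. f v * real (card {w. B v w = 0 \<and> B u w = 0}))"
    by (rule sum.cong) (auto simp: sum_distrib_left[symmetric] Int_def simp del: sum_mult_of_bool_eq)
  finally show ?thesis .
qed

lemma card_common_hyperplane:
  assumes "u \<noteq> 0"
  shows "real (card {w. B v w = 0 \<and> B u w = 0}) =
    (if \<exists>t\<in>K. v = scale t u then real (card (UNIV :: 'v set)) / real q
     else real (card (UNIV :: 'v set)) / real q ^ 2)"
proof (cases "\<exists>t\<in>K. v = scale t u")
  case True
  then obtain t where "t \<in> K" "v = scale t u" by blast
  then have "{w. B v w = 0 \<and> B u w = 0} = {w. B w u = 0}" by (auto simp: B_scale B_sym[of _ u])
  then show ?thesis using True card_level_set_real[OF assms zero_in_K] by simp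
next
  case False
  have "\<not> (\<exists>t\<in>K. u = scale t v)"
  proof
    assume "\<exists>t\<in>K. u = scale t v"
    then obtain t where t: "t \<in> K" "u = scale t v" by blast
    then have "t \<noteq> 0" using assms by auto
    then have "v = scale (inverse t) u" using t by simp
    then show False using False inverse_in_K t by blast
  qed
  then have "card {w. B w v = 0 \<and> B w u = 0} * q^2 = card (UNIV :: 'v set)"
    using card_level_set2[OF False _ zero_in_K zero_in_K] by blast
  moreover have "{w. B v w = 0 \<and> B u w = 0} = {w. B w v = 0 \<and> B w u = 0}"
    by (auto simp: B_sym[of v] B_sym[of u])
  ultimately show ?thesis using False q_ge_2
    by (simp add: field_simps flip: of_nat_mult of_nat_power)
qed

lemma sum_over_line:
  assumes "scale_invariant f" "u \<noteq> 0"
  shows "(\<Sum>v\<in>{v. \<exists>t\<in>K. v = scale t u}. f v) = f 0 + (real q - 1) * f u"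
proof -
  have "inj_on (\<lambda>t. scale t u) K"
  proof (rule inj_onI)
    fix a b assume "scale a u = scale b u"
    then have "scale (a - b) u = 0" using scale_add_left[of "a - b" b u] by simp
    then show "a = b" using assms(2) by (simp add: scale_eq_0_iff)
  qed
  moreover have "{v. \<exists>t\<in>K. v = scale t u} = (\<lambda>t. scale t u) ` K" by auto
  ultimately have "(\<Sum>v\<in>{v. \<exists>t\<in>K. v = scale t u}. f v) = (\<Sum>t\<in>K. f (scale t u))"
    by (simp add: sum.reindex)
  also have "\<dots> = f 0 + (\<Sum>t\<in>K - {0}. f (scale t u))"
    using finite_K zero_in_K by (simp add: sum.remove)
  also have "(\<Sum>t\<in>K - {0}. f (scale t u)) = (real q - 1) * f u"
    using assms(1) card_Diff_0_K by (simp add: scale_invariant_def)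
  finally show ?thesis .
qed

text \<open>
  Inversion: summing the hyperplane sums over the hyperplanes through \<open>u\<close> weights each \<open>v\<close> by the
  number of common hyperplanes, which only depends on whether \<open>v\<close> lies on the line \<open>K u\<close>.
\<close>

lemma hyperplane_sums_zero_imp_at_0:
  assumes "\<And>w. hyperplane_sum f w = 0"
  shows "f 0 = 0"
proof -
  define M where "M = real (card (UNIV :: 'v set))"
  have "M > 0" "real q \<ge> 2" using q_ge_2 by (simp_all add: M_def finite_UNIV_card_ge_0)
  have "0 = (\<Sum>w\<in>UNIV. hyperplane_sum f w * of_bool (B 0 w = 0))" using assms by simp
  also have "\<dots> = (\<Sum>v\<in>UNIV. (M / q) * f v + of_bool (v = 0) * (f v * (M - M / q)))"
    unfolding sum_hyperplane_sums
  proof (rule sum.cong[OF refl])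
    fix v
    show "f v * real (card {w. B v w = 0 \<and> B 0 w = 0}) = (M / q) * f v + of_bool (v = 0) * (f v * (M - M / q))"
    proof (cases "v = 0")
      case False
      have "{w. B v w = 0} = {w. B w v = 0}" by (metis B_sym)
      then show ?thesis using False card_level_set_real[OF False zero_in_K] by (simp add: M_def)
    qed (simp add: M_def algebra_simps)
  qed
  also have "\<dots> = (M / q) * sum f UNIV + f 0 * (M - M / q)"
    unfolding sum.distrib sum_distrib_left[symmetric] by (simp add: Int_def)
  finally show ?thesis
    using assms[of 0] \<open>M > 0\<close> \<open>real q \<ge> 2\<close> by (simp add: hyperplane_sum_at_0 field_simps)
qed

lemma scale_invariant_hyperplane_sums_zero:
  assumes f: "scale_invariant f" and zero: "\<And>w. hyperplane_sum f w = 0"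
  shows "f u = 0"
proof (cases "u = 0")
  case True then show ?thesis using hyperplane_sums_zero_imp_at_0[OF zero] by simp
next
  case False
  define M where "M = real (card (UNIV :: 'v set))"
  have "M > 0" "real q \<ge> 2" using q_ge_2 by (simp_all add: M_def finite_UNIV_card_ge_0)
  have "0 = (\<Sum>w\<in>UNIV. hyperplane_sum f w * of_bool (B u w = 0))" using zero by simp
  also have "\<dots> = (\<Sum>v\<in>UNIV. (M / q^2) * f v + (M / q - M / q^2) * (of_bool (\<exists>t\<in>K. v = scale t u) * f v))"
    unfolding sum_hyperplane_sums
    by (rule sum.cong[OF refl]) (simp add: card_common_hyperplane[OF False] M_def algebra_simps)
  also have "\<dots> = (M / q^2) * sum f UNIV + (M / q - M / q^2) * (\<Sum>v\<in>{v. \<exists>t\<in>K. v = scale t u}. f v)"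
    unfolding sum.distrib sum_distrib_left[symmetric] by (simp add: Int_def)
  also have "\<dots> = (M / q - M / q^2) * (real q - 1) * f u"
    using zero[of 0] hyperplane_sums_zero_imp_at_0[OF zero] sum_over_line[OF f False]
    by (simp add: hyperplane_sum_at_0)
  finally have "(M / q - M / q^2) * (real q - 1) * f u = 0" by simp
  moreover have "M / q - M / q^2 > 0"
    using \<open>M > 0\<close> \<open>real q \<ge> 2\<close> by (simp add: field_simps power2_eq_square)
  moreover have "real q - 1 \<noteq> 0" using \<open>real q \<ge> 2\<close> by simp
  ultimately show ?thesis by (metis mult_eq_0_iff less_irrefl)
qed

lemma scale_invariant_hyperplane_sum_inject:
  assumes "scale_invariant f" "scale_invariant g" "\<And>w. hyperplane_sum f w = hyperplane_sum g w"
  shows "f u = g u"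
proof -
  have "scale_invariant (\<lambda>v. f v + (- 1) * g v)"
    using assms by (intro scale_invariant_add scale_invariant_cmult)
  moreover have "hyperplane_sum (\<lambda>v. f v + (- 1) * g v) w = 0" for w
    unfolding hyperplane_sum_add hyperplane_sum_cmult using assms(3) by simp
  ultimately have "f u + (- 1) * g u = 0" by (rule scale_invariant_hyperplane_sums_zero)
  then show ?thesis by simp
qed

end

section \<open>The trace form of a finite field extension\<close>

definition fixed_field :: "nat \<Rightarrow> 'a::field set" where
  "fixed_field q = {x. x ^ q = x}"

lemma of_nat_card_UNIV: "of_nat (card (UNIV :: 'a::{ring_1,finite} set)) = (0 :: 'a)"
proof -
  have "(\<Sum>x\<in>UNIV. x + 1) = (\<Sum>x\<in>UNIV. (x :: 'a))"
    by (rule sum.reindex_bij_witness[of _ "\<lambda>x. x - 1" "\<lambda>x. x + 1"]) auto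
  then show ?thesis by (simp add: sum.distrib)
qed

lemma power_card_UNIV:
  fixes x :: "'a::{field,finite}"
  shows "x ^ card (UNIV :: 'a set) = x"
proof (cases "x = 0")
  case True then show ?thesis by (simp add: finite_UNIV_card_ge_0)
next
  case False
  let ?U = "UNIV - {0 :: 'a}"
  have "(\<Prod>y\<in>?U. x * y) = (\<Prod>y\<in>?U. y)"
    by (rule prod.reindex_bij_witness[of _ "\<lambda>y. y / x" "\<lambda>y. x * y"]) (use False in auto)
  then have "x ^ card ?U * \<Prod>?U = \<Prod>?U" by (simp only: prod.distrib prod_constant)
  moreover have "\<Prod>?U \<noteq> 0" by (simp add: prod_zero_iff)
  ultimately have "x ^ card ?U = 1" by (metis mult_cancel_right2)
  moreover have "card (UNIV :: 'a set) = Suc (card ?U)"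
    by (rule card_Suc_Diff1[symmetric]) auto
  ultimately show ?thesis by (metis power_Suc2 mult_1)
qed

text \<open>The trace is a parameter, pinned down by \<open>Tr_eq\<close>, so that the locale fixes the field type.\<close>

locale finite_field_extension =
  fixes p f q m :: nat and Tr :: "'a::{field,finite} \<Rightarrow> 'a"
  assumes prime_p: "prime p" and f_pos: "f \<ge> 1" and q_eq: "q = p ^ f" and m_pos: "m \<ge> 1"
    and card_UNIV: "card (UNIV :: 'a set) = q ^ m"
    and Tr_eq: "Tr = trace_rel q m"
begin

abbreviation "K \<equiv> fixed_field q :: 'a set"

lemma q_ge_2: "q \<ge> 2"
proof -
  have "p \<ge> 2" using prime_p prime_ge_2_nat by blast
  then have "p ^ 1 \<le> p ^ f" using f_pos by (intro power_increasing) auto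
  then show ?thesis using \<open>p \<ge> 2\<close> q_eq by simp
qed

lemma CHAR_eq: "CHAR('a) = p"
proof -
  have "CHAR('a) > 0" by (rule finite_imp_CHAR_pos) simp
  then have "prime CHAR('a)" by (rule prime_CHAR_semidom)
  moreover have "CHAR('a) dvd card (UNIV :: 'a set)"
    using of_nat_card_UNIV of_nat_eq_0_iff_char_dvd by blast
  then have "CHAR('a) dvd p ^ (f * m)" using card_UNIV q_eq by (simp add: power_mult)
  ultimately show ?thesis using prime_p prime_dvd_power primes_dvd_imp_eq by blast
qed

lemma frobenius_add: "(x + y :: 'a) ^ (q ^ i) = x ^ (q ^ i) + y ^ (q ^ i)"
  using freshmans_dream'[of "q ^ i" "f * i" x y] CHAR_eq prime_p q_eq by (simp add: power_mult)

lemma frobenius_sum: "(sum g A :: 'a) ^ (q ^ i) = (\<Sum>a\<in>A. g a ^ (q ^ i))"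
  using freshmans_dream_sum'[of "q ^ i" "f * i" g A] CHAR_eq prime_p q_eq by (simp add: power_mult)

lemma fixed_field_power: "a \<in> K \<Longrightarrow> a ^ (q ^ i) = a"
proof (induction i)
  case (Suc i)
  have "a ^ (q ^ Suc i) = (a ^ (q ^ i)) ^ q" by (simp add: power_mult[symmetric] mult.commute)
  then show ?case using Suc by (simp add: fixed_field_def)
qed simp

lemma zero_in_K: "0 \<in> K" using q_ge_2 by (simp add: fixed_field_def)

lemma one_in_K: "1 \<in> K" by (simp add: fixed_field_def)

lemma mult_in_K: "a \<in> K \<Longrightarrow> b \<in> K \<Longrightarrow> a * b \<in> K"
  by (simp add: fixed_field_def power_mult_distrib)

lemma uminus_in_K: "a \<in> K \<Longrightarrow> - a \<in> K"
proof -
  assume a: "a \<in> K"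
  have "(- a) ^ q + a ^ q = 0" using frobenius_add[of "- a" a 1] q_ge_2 by (simp add: power_0_left)
  then show ?thesis using a by (simp add: fixed_field_def eq_neg_iff_add_eq_0)
qed

lemma inverse_in_K: "a \<in> K \<Longrightarrow> inverse a \<in> K"
  by (simp add: fixed_field_def power_inverse)

lemma Tr_add: "Tr (x + y) = Tr x + Tr y"
  by (simp add: Tr_eq trace_rel_def frobenius_add sum.distrib)

lemma Tr_mult_K: "a \<in> K \<Longrightarrow> Tr (a * x) = a * Tr x"
  by (simp add: Tr_eq trace_rel_def power_mult_distrib fixed_field_power sum_distrib_left)

lemma Tr_0 [simp]: "Tr 0 = 0"
  using Tr_add[of 0 0] by (metis add.right_neutral add_left_cancel)

lemma Tr_in_K: "Tr x \<in> K"
proof -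
  have "Tr x ^ q = (\<Sum>i<m. x ^ (q ^ Suc i))"
    using frobenius_sum[of "\<lambda>i. x ^ (q ^ i)" "{..<m}" 1]
    by (simp add: Tr_eq trace_rel_def power_mult[symmetric] mult.commute)
  also have "\<dots> = Tr x"
  proof -
    have "(\<Sum>i<Suc m. x ^ (q ^ i)) = x ^ q ^ 0 + (\<Sum>i<m. x ^ (q ^ Suc i))" by (rule sum.lessThan_Suc_shift)
    moreover have "(\<Sum>i<Suc m. x ^ (q ^ i)) = (\<Sum>i<m. x ^ (q ^ i)) + x ^ (q ^ m)" by simp
    ultimately show ?thesis using power_card_UNIV[of x] card_UNIV by (simp add: Tr_eq trace_rel_def)
  qed
  finally show ?thesis by (simp add: fixed_field_def)
qed

lemma card_K_le: "card K \<le> q"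
proof -
  define P :: "'a poly" where "P = monom 1 q + [:0, -1:]"
  have deg: "degree P = q"
    using q_ge_2 unfolding P_def by (subst degree_add_eq_left) (simp_all add: degree_monom_eq)
  then have "P \<noteq> 0" using q_ge_2 by auto
  moreover have "K = {x. poly P x = 0}" by (simp add: fixed_field_def P_def poly_monom)
  ultimately show ?thesis using card_poly_roots_bound[of P] deg by simp
qed

lemma card_Tr_eq_le: "card {x. Tr x = c} \<le> q ^ (m - 1)"
proof -
  define P :: "'a poly" where "P = (\<Sum>i<m. monom 1 (q ^ i)) - [:c:]"
  have inj: "inj (\<lambda>i. q ^ i)" using q_ge_2 by (simp add: inj_def power_inject_exp)
  have "coeff P (q ^ (m - 1)) = (\<Sum>i<m. of_bool (q ^ i = q ^ (m - 1)))"
    using q_ge_2 by (simp add: P_def coeff_sum coeff_monom coeff_pCons of_bool_def split: nat.split)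
  also have "\<dots> = (\<Sum>i<m. of_bool (i = m - 1))"
    by (rule sum.cong) (use inj in \<open>auto simp: inj_eq\<close>)
  also have "{i. i = m - 1 \<and> i < m} = {m - 1}" using m_pos by auto
  then have "(\<Sum>i<m. of_bool (i = m - 1)) = (1 :: 'a)" by (simp add: Int_def)
  finally have "P \<noteq> 0" by auto
  moreover have "degree P \<le> q ^ (m - 1)"
  proof -
    have "degree (\<Sum>i<m. monom (1::'a) (q ^ i)) \<le> q ^ (m - 1)"
    proof (rule degree_sum_le)
      fix i assume "i \<in> {..<m}"
      then have "q ^ i \<le> q ^ (m - 1)" using q_ge_2 by (intro power_increasing) auto
      then show "degree (monom (1::'a) (q ^ i)) \<le> q ^ (m - 1)" using degree_monom_le order_trans by blast
    qed simp
    then show ?thesis unfolding P_def using degree_diff_le by fastforce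
  qed
  moreover have "{x. Tr x = c} = {x. poly P x = 0}"
    by (simp add: P_def Tr_eq trace_rel_def poly_sum poly_monom)
  ultimately show ?thesis using card_poly_roots_bound[of P] by simp
qed

lemma card_K: "card K = q"
proof -
  have "q * q ^ (m - 1) = card (UNIV :: 'a set)" using card_UNIV m_pos by (simp flip: power_Suc)
  also have "\<dots> = (\<Sum>c\<in>K. card {x. Tr x = c})"
    by (rule card_UNIV_eq_sum_card_fibres) (simp_all add: Tr_in_K)
  also have "\<dots> \<le> card K * q ^ (m - 1)"
    using sum_bounded_above[of K "\<lambda>c. card {x. Tr x = c}"] card_Tr_eq_le by simp
  finally have "q \<le> card K" using q_ge_2 by simp
  then show ?thesis using card_K_le by simp
qed

lemma Tr_not_identically_0: "\<exists>x. Tr x \<noteq> 0"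
proof (rule ccontr)
  assume "\<not> (\<exists>x. Tr x \<noteq> 0)"
  then have "q ^ m \<le> q ^ (m - 1)" using card_Tr_eq_le[of 0] card_UNIV by simp
  moreover have "q ^ (m - 1) < q ^ m" using q_ge_2 m_pos by (intro power_strict_increasing) auto
  ultimately show False by simp
qed

lemma Tr_mult_nondegenerate: "(\<And>u. Tr (v * u) = 0) \<Longrightarrow> v = 0"
proof (rule ccontr)
  assume zero: "\<And>u. Tr (v * u) = 0" and "v \<noteq> 0"
  obtain x where "Tr x \<noteq> 0" using Tr_not_identically_0 by blast
  moreover have "x = v * (x / v)" using \<open>v \<noteq> 0\<close> by simp
  ultimately show False using zero by metis
qed

end

sublocale finite_field_extension \<subseteq> F1: nondegenerate_form_space K q "(*)" "\<lambda>x y. Tr (x * y)"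
proof unfold_locales
  fix a b v w u :: 'a
  show "(a + b) * v = a * v + b * v" "a * (v + w) = a * v + a * w"
    by (simp_all add: distrib_left distrib_right)
  show "Tr ((v + w) * u) = Tr (v * u) + Tr (w * u)" by (simp add: distrib_right Tr_add)
  show "a \<in> K \<Longrightarrow> Tr (a * v * u) = a * Tr (v * u)" by (simp add: Tr_mult_K mult.assoc)
  show "Tr (v * u) = Tr (u * v)" by (simp add: mult.commute)
  show "(\<And>u. Tr (v * u) = 0) \<Longrightarrow> v = 0" by (rule Tr_mult_nondegenerate)
qed (simp_all add: zero_in_K one_in_K uminus_in_K inverse_in_K card_K Tr_in_K)

sublocale finite_field_extension \<subseteq> F2: nondegenerate_form_space K q
  "\<lambda>a (y, z). (a * y, a * z)" "\<lambda>(y, z) (\<alpha>, \<beta>). Tr (y * \<alpha> + z * \<beta>)"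
proof unfold_locales
  fix a b :: 'a and v w u :: "'a \<times> 'a"
  show "(case v of (y, z) \<Rightarrow> ((a + b) * y, (a + b) * z)) =
        (case v of (y, z) \<Rightarrow> (a * y, a * z)) + (case v of (y, z) \<Rightarrow> (b * y, b * z))"
    by (cases v) (simp add: distrib_right)
  show "(case v + w of (y, z) \<Rightarrow> (a * y, a * z)) =
        (case v of (y, z) \<Rightarrow> (a * y, a * z)) + (case w of (y, z) \<Rightarrow> (a * y, a * z))"
    by (cases v; cases w) (simp add: distrib_left)
  show "(case case v of (y, z) \<Rightarrow> (b * y, b * z) of (y, z) \<Rightarrow> (a * y, a * z)) =
        (case v of (y, z) \<Rightarrow> (a * b * y, a * b * z))"
    by (cases v) simp
  show "(case v of (y, z) \<Rightarrow> (1 * y, 1 * z)) = v" by (cases v) simp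
  show "(case v + w of (y, z) \<Rightarrow> \<lambda>(\<alpha>, \<beta>). Tr (y * \<alpha> + z * \<beta>)) u =
        (case v of (y, z) \<Rightarrow> \<lambda>(\<alpha>, \<beta>). Tr (y * \<alpha> + z * \<beta>)) u
        + (case w of (y, z) \<Rightarrow> \<lambda>(\<alpha>, \<beta>). Tr (y * \<alpha> + z * \<beta>)) u"
    by (cases v; cases w; cases u) (simp add: Tr_add algebra_simps)
  show "a \<in> K \<Longrightarrow> (case case v of (y, z) \<Rightarrow> (a * y, a * z) of (y, z) \<Rightarrow> \<lambda>(\<alpha>, \<beta>). Tr (y * \<alpha> + z * \<beta>)) u =
        a * (case v of (y, z) \<Rightarrow> \<lambda>(\<alpha>, \<beta>). Tr (y * \<alpha> + z * \<beta>)) u"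
    by (cases v; cases u) (simp add: Tr_mult_K mult.assoc flip: distrib_left)
  show "(case v of (y, z) \<Rightarrow> \<lambda>(\<alpha>, \<beta>). Tr (y * \<alpha> + z * \<beta>)) u
        = (case u of (y, z) \<Rightarrow> \<lambda>(\<alpha>, \<beta>). Tr (y * \<alpha> + z * \<beta>)) v"
    by (cases v; cases u) (simp add: mult.commute)
  show "(case v of (y, z) \<Rightarrow> \<lambda>(\<alpha>, \<beta>). Tr (y * \<alpha> + z * \<beta>)) u \<in> K"
    by (cases v; cases u) (simp add: Tr_in_K)
  show "v = 0" if "\<And>u. (case v of (y, z) \<Rightarrow> \<lambda>(\<alpha>, \<beta>). Tr (y * \<alpha> + z * \<beta>)) u = 0"
  proof -
    obtain y z where v: "v = (y, z)" by (cases v)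
    have "Tr (y * \<alpha>) = 0" for \<alpha> using that[of "(\<alpha>, 0)"] v by simp
    then have "y = 0" by (rule Tr_mult_nondegenerate)
    moreover have "Tr (z * \<beta>) = 0" for \<beta> using that[of "(0, \<beta>)"] v by simp
    then have "z = 0" by (rule Tr_mult_nondegenerate)
    ultimately show "v = 0" using v by (simp add: zero_prod_def)
  qed
qed (simp_all add: zero_in_K one_in_K uminus_in_K inverse_in_K card_K)

section \<open>The cyclotomic class \<open>C\<^sub>0\<close>\<close>

lemma power_eq_power_mod:
  fixes x :: "'a::monoid_mult"
  assumes "x ^ j = 1"
  shows "x ^ a = x ^ (a mod j)"
proof -
  have "x ^ a = x ^ (j * (a div j) + a mod j)" by simp
  also have "\<dots> = (x ^ j) ^ (a div j) * x ^ (a mod j)" by (simp only: power_add power_mult)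
  finally show ?thesis using assms by simp
qed

locale cyclotomic_class = finite_field_extension p f q m Tr
  for p f q m :: nat and Tr :: "'a::{field,finite} \<Rightarrow> 'a" +
  fixes N :: nat and \<omega> :: 'a
  assumes m_ge_2: "m \<ge> 2" and primitive: "primitive_elem \<omega>"
    and N_pos: "N > 0" and N_dvd: "N dvd q ^ m - 1"
    and Fq_star_subset: "Fq_star q \<subseteq> cyclo_C0 N \<omega>"
begin

abbreviation "n \<equiv> q ^ m"
abbreviation "C0 \<equiv> cyclo_C0 N \<omega>"

lemma n_gt_3: "n > 3"
proof -
  have "q ^ 2 \<le> q ^ m" using m_ge_2 q_ge_2 by (intro power_increasing) auto
  moreover have "2 ^ 2 \<le> q ^ 2" using q_ge_2 by (intro power_mono) auto
  ultimately show ?thesis by simp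
qed

lemma omega_ne_0: "\<omega> \<noteq> 0"
proof
  assume "\<omega> = 0"
  have "\<not> UNIV \<subseteq> ({0, 1} :: 'a set)"
  proof
    assume "UNIV \<subseteq> ({0, 1} :: 'a set)"
    then have "n \<le> 2" using card_mono[of "{0, 1 :: 'a}" UNIV] card_UNIV by (simp add: card_insert_le_m1)
    then show False using n_gt_3 by simp
  qed
  then obtain x :: 'a where "x \<noteq> 0" "x \<noteq> 1" by auto
  moreover obtain k where "x = \<omega> ^ k" using primitive \<open>x \<noteq> 0\<close> unfolding primitive_elem_def by blast
  ultimately show False using \<open>\<omega> = 0\<close> by (cases k) auto
qed

lemma omega_power_ne_0: "\<omega> ^ i \<noteq> 0"
  using omega_ne_0 by simp

lemma omega_power_n_minus_1: "\<omega> ^ (n - 1) = 1"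
proof -
  have "n = Suc (n - 1)" using n_gt_3 by simp
  then have "\<omega> ^ (n - 1) * \<omega> = \<omega> ^ n" by (metis power_Suc2)
  then have "\<omega> ^ (n - 1) * \<omega> = 1 * \<omega>" using power_card_UNIV[of \<omega>] card_UNIV by simp
  then show ?thesis using omega_ne_0 by (metis mult_right_cancel)
qed

lemma omega_power_eq_1_imp_dvd:
  assumes "\<omega> ^ a = 1"
  shows "(n - 1) dvd a"
proof (rule ccontr)
  assume "\<not> (n - 1) dvd a"
  define j where "j = a mod (n - 1)"
  have j: "j > 0" "j < n - 1" using \<open>\<not> (n - 1) dvd a\<close> n_gt_3 by (auto simp: j_def dvd_eq_mod_eq_0)
  have "\<omega> ^ j = 1" using assms power_eq_power_mod[OF omega_power_n_minus_1, of a] j_def by simp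
  have "UNIV - {0} \<subseteq> (\<lambda>k. \<omega> ^ k) ` {..<j}"
  proof
    fix x :: 'a assume "x \<in> UNIV - {0}"
    then obtain k where "x = \<omega> ^ k" using primitive unfolding primitive_elem_def by blast
    then have "x = \<omega> ^ (k mod j)" using power_eq_power_mod[OF \<open>\<omega> ^ j = 1\<close>] by simp
    then show "x \<in> (\<lambda>k. \<omega> ^ k) ` {..<j}" using j by auto
  qed
  then have "card (UNIV - {0 :: 'a}) \<le> card ((\<lambda>k. \<omega> ^ k) ` {..<j})" by (intro card_mono) auto
  also have "\<dots> \<le> j" using card_image_le[of "{..<j}" "\<lambda>k. \<omega> ^ k"] by simp
  finally show False using j card_UNIV by (simp add: card_Diff_singleton)
qed

lemma omega_power_eq_imp_mod_eq:
  assumes "\<omega> ^ a = \<omega> ^ b"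
  shows "a mod (n - 1) = b mod (n - 1)"
proof -
  have less_eq: "i = j" if "\<omega> ^ i = \<omega> ^ j" "i < n - 1" "j < n - 1" "i \<le> j" for i j
  proof -
    have "\<omega> ^ j = \<omega> ^ i * \<omega> ^ (j - i)" using \<open>i \<le> j\<close> by (simp flip: power_add)
    then have "\<omega> ^ (j - i) = 1" using that omega_ne_0 by simp
    then have "(n - 1) dvd (j - i)" by (rule omega_power_eq_1_imp_dvd)
    then show ?thesis using that by (auto dest: dvd_imp_le)
  qed
  have "\<omega> ^ (a mod (n - 1)) = \<omega> ^ (b mod (n - 1))"
    using assms power_eq_power_mod[OF omega_power_n_minus_1] by metis
  moreover have "a mod (n - 1) < n - 1" "b mod (n - 1) < n - 1" using n_gt_3 by auto
  ultimately show ?thesis using less_eq by (metis nle_le)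
qed

lemma mem_C0_iff: "x \<in> C0 \<longleftrightarrow> (\<exists>k. x = \<omega> ^ (N * k))"
  by (simp add: cyclo_C0_def)

lemma one_in_C0: "1 \<in> C0"
  unfolding mem_C0_iff by (rule exI[of _ 0]) simp

lemma mult_in_C0: "x \<in> C0 \<Longrightarrow> y \<in> C0 \<Longrightarrow> x * y \<in> C0"
  unfolding mem_C0_iff by (metis distrib_left power_add)

lemma power_in_C0: "x \<in> C0 \<Longrightarrow> x ^ j \<in> C0"
  by (induction j) (auto simp: one_in_C0 mult_in_C0)

lemma C0_ne_0: "x \<in> C0 \<Longrightarrow> x \<noteq> 0"
  unfolding mem_C0_iff using omega_ne_0 by auto

lemma zero_notin_C0 [simp]: "0 \<notin> C0"
  using C0_ne_0 by blast

lemma inverse_in_C0: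
  assumes "x \<in> C0"
  shows "inverse x \<in> C0"
proof -
  obtain k where "x = \<omega> ^ (N * k)" using assms mem_C0_iff by blast
  then have "x ^ (n - 1) = (\<omega> ^ (n - 1)) ^ (N * k)" by (simp flip: power_mult add: mult.commute)
  moreover have "n - 1 = Suc (n - 2)" using n_gt_3 by simp
  ultimately have "x * x ^ (n - 2) = 1" using omega_power_n_minus_1 by (metis power_Suc power_one)
  then have "inverse x = x ^ (n - 2)" using C0_ne_0 assms by (metis inverse_unique)
  then show ?thesis using power_in_C0 assms by simp
qed

lemma K_subset_C0: "a \<in> K \<Longrightarrow> a \<noteq> 0 \<Longrightarrow> a \<in> C0"
  using Fq_star_subset unfolding Fq_star_def fixed_field_def by auto

lemma uminus_in_C0: "x \<in> C0 \<Longrightarrow> - x \<in> C0"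
  using K_subset_C0[OF uminus_in_K[OF one_in_K]] mult_in_C0[of "- 1" x] by simp

lemma mult_in_C0_iff:
  assumes "c \<in> C0"
  shows "c * x \<in> C0 \<longleftrightarrow> x \<in> C0"
proof
  assume "c * x \<in> C0"
  then have "inverse c * (c * x) \<in> C0" using inverse_in_C0[OF assms] mult_in_C0 by blast
  then show "x \<in> C0" using C0_ne_0[OF assms] by (simp add: mult.assoc[symmetric])
qed (use assms mult_in_C0 in blast)

lemma nonzero_in_coset:
  assumes "a \<noteq> 0"
  obtains j c where "j < N" "c \<in> C0" "a = \<omega> ^ j * c"
proof -
  obtain k where k: "a = \<omega> ^ k" using primitive assms unfolding primitive_elem_def by blast
  have "\<omega> ^ k = \<omega> ^ (k mod N) * \<omega> ^ (N * (k div N))" by (simp flip: power_add)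
  then show ?thesis using that[of "k mod N" "\<omega> ^ (N * (k div N))"] k N_pos mem_C0_iff by auto
qed

lemma coset_index_unique:
  assumes "i < N" "j < N" "c \<in> C0" "c' \<in> C0" "\<omega> ^ i * c = \<omega> ^ j * c'"
  shows "i = j"
proof -
  obtain a b where "c = \<omega> ^ (N * a)" "c' = \<omega> ^ (N * b)" using assms mem_C0_iff by blast
  then have "\<omega> ^ (i + N * a) = \<omega> ^ (j + N * b)" using assms by (simp add: power_add)
  then have "(i + N * a) mod (n - 1) mod N = (j + N * b) mod (n - 1) mod N"
    by (metis omega_power_eq_imp_mod_eq)
  then have "(i + N * a) mod N = (j + N * b) mod N" using N_dvd by (simp add: mod_mod_cancel)
  then show ?thesis using assms by simp
qed

lemma card_C0: "card C0 * N = n - 1"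
proof -
  obtain t where t: "n - 1 = N * t" using N_dvd by (auto elim: dvdE)
  have "C0 = (\<lambda>k. \<omega> ^ (N * k)) ` {..<t}"
  proof (rule set_eqI, rule iffI)
    fix x assume "x \<in> C0"
    then obtain k where "x = \<omega> ^ (N * k)" using mem_C0_iff by blast
    then have "x = \<omega> ^ (N * (k mod t))"
      using power_eq_power_mod[OF omega_power_n_minus_1, of "N * k"] t by simp
    moreover have "t > 0" using t n_gt_3 by (cases t) auto
    ultimately show "x \<in> (\<lambda>k. \<omega> ^ (N * k)) ` {..<t}" by auto
  qed (auto simp: mem_C0_iff)
  moreover have "inj_on (\<lambda>k. \<omega> ^ (N * k)) {..<t}"
  proof (rule inj_onI)
    fix a b assume "a \<in> {..<t}" "b \<in> {..<t}" "\<omega> ^ (N * a) = \<omega> ^ (N * b)"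
    then show "a = b" using omega_power_eq_imp_mod_eq[of "N * a" "N * b"] t N_pos by auto
  qed
  ultimately show ?thesis using t by (simp add: card_image)
qed

end

section \<open>Zero-trace counts on the cosets of \<open>C\<^sub>0\<close>\<close>

lemma (in finite_field_extension) card_dvd_if_K_stable:
  assumes "finite S" "0 \<notin> S" "\<And>l x. l \<in> K - {0} \<Longrightarrow> x \<in> S \<Longrightarrow> l * x \<in> S"
  shows "(q - 1) dvd card S"
  using assms
proof (induction "card S" arbitrary: S rule: less_induct)
  case less
  show ?case
  proof (cases "S = {}")
    case False
    then obtain x where x: "x \<in> S" by auto
    define orbit where "orbit = (\<lambda>l. l * x) ` (K - {0})"
    have "x \<noteq> 0" using x less.prems by auto
    then have "inj_on (\<lambda>l. l * x) (K - {0})" by (auto simp: inj_on_def)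
    then have card_orbit: "card orbit = q - 1" using card_K zero_in_K by (simp add: orbit_def card_image)
    have "orbit \<subseteq> S" using less.prems x by (auto simp: orbit_def)
    have stable: "l * y \<in> S - orbit" if "l \<in> K - {0}" "y \<in> S - orbit" for l y
    proof -
      have "l * y \<notin> orbit"
      proof
        assume "l * y \<in> orbit"
        then obtain l' where l': "l' \<in> K - {0}" "l * y = l' * x" by (auto simp: orbit_def)
        then have "y = (l' / l) * x" using that by (simp add: field_simps)
        moreover have "l' / l \<in> K - {0}" using l' that mult_in_K inverse_in_K by (auto simp: divide_inverse)
        ultimately have "y \<in> orbit" unfolding orbit_def by (rule image_eqI)
        then show False using that by simp
      qed
      then show ?thesis using less.prems that by auto
    qed
    have card_S: "card S = card (S - orbit) + (q - 1)"
      using \<open>orbit \<subseteq> S\<close> card_orbit less.prems card_Diff_subset[of orbit S] card_mono[of S orbit]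
      by (simp add: finite_subset)
    then have "card (S - orbit) < card S" using q_ge_2 by simp
    then have "(q - 1) dvd card (S - orbit)" by (intro less.hyps) (use less.prems stable in auto)
    then show ?thesis using card_S by simp
  qed simp
qed

context cyclotomic_class
begin

definition zero_trace_count :: "'a \<Rightarrow> nat" where
  "zero_trace_count a = card {x \<in> C0. Tr (x * a) = 0}"

abbreviation "k \<equiv> card C0"

lemma zero_trace_count_0: "zero_trace_count 0 = k"
  by (simp add: zero_trace_count_def)

lemma zero_trace_count_dvd: "(q - 1) dvd zero_trace_count a"
  unfolding zero_trace_count_def
proof (rule card_dvd_if_K_stable)
  fix l x assume "l \<in> K - {0}" "x \<in> {x \<in> C0. Tr (x * a) = 0}"
  then show "l * x \<in> {x \<in> C0. Tr (x * a) = 0}"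
    using K_subset_C0 mult_in_C0 Tr_mult_K[of l "x * a"] by (auto simp: mult.assoc)
qed simp_all

lemma zero_trace_count_mult_C0:
  assumes c: "c \<in> C0"
  shows "zero_trace_count (c * a) = zero_trace_count a"
proof -
  have "{x \<in> C0. Tr (x * a) = 0} = (\<lambda>x. c * x) ` {x \<in> C0. Tr (x * (c * a)) = 0}"
  proof (rule set_eqI, rule iffI)
    fix y assume y: "y \<in> {x \<in> C0. Tr (x * a) = 0}"
    have "inverse c * y \<in> C0" using y c inverse_in_C0 mult_in_C0 by blast
    moreover have "Tr (inverse c * y * (c * a)) = 0" using y c C0_ne_0 by (simp add: field_simps)
    ultimately have "inverse c * y \<in> {x \<in> C0. Tr (x * (c * a)) = 0}" by simp
    moreover have "y = c * (inverse c * y)" using c C0_ne_0 by simp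
    ultimately show "y \<in> (\<lambda>x. c * x) ` {x \<in> C0. Tr (x * (c * a)) = 0}" by blast
  qed (use c mult_in_C0 in \<open>auto simp: mult_ac\<close>)
  moreover have "inj_on (\<lambda>x. c * x) {x \<in> C0. Tr (x * (c * a)) = 0}"
    using c C0_ne_0 by (auto simp: inj_on_def)
  ultimately show ?thesis unfolding zero_trace_count_def by (simp add: card_image)
qed

lemma hyperplane_sum_indicator_C0: "F1.hyperplane_sum (indicator C0) a = real (zero_trace_count a)"
  by (simp add: F1.hyperplane_sum_def zero_trace_count_def indicator_def Int_def conj_commute)

lemma sum_indicator_C0: "sum (indicator C0 :: 'a \<Rightarrow> real) UNIV = real k"
  by (simp add: indicator_def Int_def)

lemma scale_invariant_indicator_C0: "F1.scale_invariant (indicator C0)"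
  unfolding F1.scale_invariant_def using K_subset_C0 mult_in_C0_iff by (auto simp: indicator_def)

lemma sum_zero_trace_count: "(\<Sum>a\<in>UNIV. real (zero_trace_count a)) = real k * (real n / real q)"
proof -
  have "(\<Sum>a\<in>UNIV. real (zero_trace_count a))
      = (\<Sum>w\<in>UNIV. F1.hyperplane_sum (indicator C0) w * of_bool (Tr (0 * w) = 0))"
    by (simp add: hyperplane_sum_indicator_C0)
  also have "\<dots> = (\<Sum>v\<in>UNIV. indicator C0 v * real (card {w. Tr (v * w) = 0 \<and> Tr (0 * w) = 0}))"
    by (rule F1.sum_hyperplane_sums)
  also have "\<dots> = (\<Sum>v\<in>UNIV. indicator C0 v * (real n / real q))"
  proof (rule sum.cong[OF refl])
    fix v
    have "{w. Tr (v * w) = 0 \<and> Tr (0 * w) = 0} = {w. Tr (w * v) = 0}" by (auto simp: mult.commute)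
    moreover have "v \<in> C0 \<Longrightarrow> real (card {w. Tr (w * v) = 0}) = real n / real q"
      using F1.card_level_set_real[OF C0_ne_0 zero_in_K, of v] card_UNIV by simp
    ultimately show "indicator C0 v * real (card {w. Tr (v * w) = 0 \<and> Tr (0 * w) = 0}) = indicator C0 v * (real n / real q)"
      by (simp add: indicator_def)
  qed
  also have "\<dots> = real k * (real n / real q)"
    by (simp only: sum_distrib_right[symmetric] sum_indicator_C0)
  finally show ?thesis .
qed

lemma zero_trace_count_if_constant:
  assumes const: "\<And>a. a \<noteq> 0 \<Longrightarrow> zero_trace_count a = c"
  shows "real c = real k / (real n - 1) * (real n / real q - 1)"
proof -
  have "(\<Sum>a\<in>UNIV. real (zero_trace_count a))
      = real (zero_trace_count 0) + (\<Sum>a\<in>UNIV - {0}. real (zero_trace_count a))"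
    by (simp add: sum.remove)
  also have "(\<Sum>a\<in>UNIV - {0}. real (zero_trace_count a)) = (\<Sum>a\<in>UNIV - {0::'a}. real c)"
    by (rule sum.cong) (auto simp: const)
  also have "\<dots> = (real n - 1) * real c"
    using card_UNIV n_gt_3 by (simp add: card_Diff_singleton of_nat_diff)
  finally have "(real n - 1) * real c = real k * (real n / real q - 1)"
    using sum_zero_trace_count zero_trace_count_0 by (simp add: algebra_simps)
  moreover have "real n - 1 > 0" using n_gt_3 by (simp del: of_nat_power)
  ultimately show ?thesis by (simp add: field_simps)
qed

text \<open>
  If the zero-trace count were constant on \<open>F\<^sup>*\<close>, the hyperplane sums of the indicator of \<open>C\<^sub>0\<close>
  would be those of an affine combination of \<open>1\<close> and the point mass at \<open>0\<close>.
\<close>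

lemma C0_eq_nonzero_if_zero_trace_count_constant:
  assumes const: "\<And>a. a \<noteq> 0 \<Longrightarrow> zero_trace_count a = c" and "x \<noteq> 0"
  shows "x \<in> C0"
proof -
  define t where "t = real k / (real n - 1)"
  have "real n - 1 > 0" using n_gt_3 by (simp del: of_nat_power)
  then have t: "t * (real n - 1) = real k" by (simp add: t_def)
  have c: "real c = t * (real n / real q - 1)"
    using zero_trace_count_if_constant[OF const] by (simp add: t_def)
  define g where "g v = t * 1 + (- t) * of_bool (v = 0)" for v :: 'a
  have "F1.hyperplane_sum (indicator C0) w = t * F1.hyperplane_sum (\<lambda>v. 1) w - t" for w
  proof (cases "w = 0")
    case True
    then show ?thesis using t
      by (simp add: hyperplane_sum_indicator_C0 F1.hyperplane_sum_1 card_UNIV zero_trace_count_0 algebra_simps)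
  next
    case False
    then show ?thesis using const[OF False] c
      by (simp add: hyperplane_sum_indicator_C0 F1.hyperplane_sum_1 card_UNIV algebra_simps)
  qed
  moreover have "F1.hyperplane_sum g w = t * F1.hyperplane_sum (\<lambda>v. 1) w - t" for w
    unfolding g_def F1.hyperplane_sum_add F1.hyperplane_sum_cmult F1.hyperplane_sum_delta by simp
  ultimately have "F1.hyperplane_sum (indicator C0) w = F1.hyperplane_sum g w" for w by simp
  moreover have "F1.scale_invariant g" unfolding g_def
    by (intro F1.scale_invariant_add F1.scale_invariant_cmult F1.scale_invariant_const F1.scale_invariant_delta)
  ultimately have "indicator C0 v = g v" for v
    using F1.scale_invariant_hyperplane_sum_inject[OF scale_invariant_indicator_C0] by blast
  from this[of 1] this[of x] show ?thesis using \<open>x \<noteq> 0\<close> one_in_C0 by (simp add: g_def indicator_def)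
qed

end

section \<open>Strongly regular \<open>Cay(F, C\<^sub>0)\<close>: the zero-trace count takes two values\<close>

lemma quadratic_roots_cases:
  fixes a b c x y z :: real
  assumes "a \<noteq> 0" and roots: "a * x^2 + b * x + c = 0" "a * y^2 + b * y + c = 0" "a * z^2 + b * z + c = 0"
    and "x \<noteq> y"
  shows "z = x \<or> z = y"
proof -
  have sum_of_roots: "a * (s + t) + b = 0" if "a * s^2 + b * s + c = 0" "a * t^2 + b * t + c = 0" "s \<noteq> t" for s t
  proof -
    have "(s - t) * (a * (s + t) + b) = (a * s^2 + b * s + c) - (a * t^2 + b * t + c)"
      by (simp add: algebra_simps power2_eq_square)
    then show ?thesis using that by simp
  qed
  show ?thesis
  proof (rule ccontr)
    assume "\<not> (z = x \<or> z = y)"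
    then have "a * (x + y) + b = 0" "a * (x + z) + b = 0" using sum_of_roots roots \<open>x \<noteq> y\<close> by metis+
    then have "a * y = a * z" unfolding distrib_left by linarith
    then show False using \<open>a \<noteq> 0\<close> \<open>\<not> (z = x \<or> z = y)\<close> by simp
  qed
qed

locale srg_cyclotomic_class = cyclotomic_class +
  assumes srg_C0: "is_srg (UNIV :: 'a set) (cayley_adj (cyclo_C0 N \<omega>))"
begin

lemma srg_C0_parameters:
  obtains l u :: int where
    "\<And>x y. x \<noteq> y \<Longrightarrow> x - y \<in> C0 \<Longrightarrow> int (card {z. x - z \<in> C0 \<and> y - z \<in> C0}) = l"
    "\<And>x y. x \<noteq> y \<Longrightarrow> x - y \<notin> C0 \<Longrightarrow> int (card {z. x - z \<in> C0 \<and> y - z \<in> C0}) = u"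
    "\<exists>x y. x \<noteq> y \<and> x - y \<notin> C0"
proof -
  obtain v k l u where "srg (UNIV :: 'a set) (cayley_adj C0) v k l u"
    using srg_C0 unfolding is_srg_def by blast
  then show ?thesis by (intro that[of l u]) (auto simp: srg_def cayley_adj_def)
qed

lemma convolution_indicator_C0_eq_card:
  "F1.convolution (indicator C0) (indicator C0) u = real (card {z. u - z \<in> C0 \<and> 0 - z \<in> C0})"
proof -
  have "{z. u - z \<in> C0 \<and> 0 - z \<in> C0} = (\<lambda>v. u - v) ` {v. v \<in> C0 \<and> u - v \<in> C0}"
  proof (rule set_eqI, rule iffI)
    fix z assume "z \<in> {z. u - z \<in> C0 \<and> 0 - z \<in> C0}"
    then have "u - z \<in> C0 \<and> u - (u - z) \<in> C0" using uminus_in_C0[of "0 - z"] by auto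
    then show "z \<in> (\<lambda>v. u - v) ` {v. v \<in> C0 \<and> u - v \<in> C0}" by force
  qed (use uminus_in_C0 in fastforce)
  then have "card {z. u - z \<in> C0 \<and> 0 - z \<in> C0} = card {v. v \<in> C0 \<and> u - v \<in> C0}"
    by (simp add: card_image inj_on_def)
  then show ?thesis by (simp add: F1.convolution_def indicator_def Int_def)
qed

lemma convolution_indicator_C0:
  obtains l u :: real where
    "\<And>v. F1.convolution (indicator C0) (indicator C0) v
        = (real k - u) * of_bool (v = 0) + (l - u) * indicator C0 v + u * 1"
proof -
  obtain l u :: int where
    adj: "\<And>x y. x \<noteq> y \<Longrightarrow> x - y \<in> C0 \<Longrightarrow> int (card {z. x - z \<in> C0 \<and> y - z \<in> C0}) = l" and
    nonadj: "\<And>x y. x \<noteq> y \<Longrightarrow> x - y \<notin> C0 \<Longrightarrow> int (card {z. x - z \<in> C0 \<and> y - z \<in> C0}) = u"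
    using srg_C0_parameters by metis
  have "{z. 0 - z \<in> C0 \<and> 0 - z \<in> C0} = uminus ` C0"
    using uminus_in_C0 by (auto simp: image_iff) (metis minus_minus)
  then have "card {z. 0 - z \<in> C0 \<and> 0 - z \<in> C0} = k" by (simp add: card_image)
  then have "F1.convolution (indicator C0) (indicator C0) v
      = (real k - of_int u) * of_bool (v = 0) + (of_int l - of_int u) * indicator C0 v + of_int u * 1" for v
    using adj[of v 0] nonadj[of v 0]
    by (cases "v = 0"; cases "v \<in> C0") (simp_all add: convolution_indicator_C0_eq_card indicator_def)
  then show ?thesis by (rule that)
qed

lemma zero_trace_count_quadratic:
  obtains L U :: real where
    "\<And>a. a \<noteq> 0 \<Longrightarrow> real (zero_trace_count a)^2 + (real k - real (zero_trace_count a))^2 / (real q - 1)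
        = real k + L * real (zero_trace_count a) + U"
proof -
  obtain l u :: real where conv: "\<And>v. F1.convolution (indicator C0) (indicator C0) v
      = (real k - u) * of_bool (v = 0) + (l - u) * indicator C0 v + u * 1"
    using convolution_indicator_C0 by blast
  have "real (zero_trace_count a)^2 + (real k - real (zero_trace_count a))^2 / (real q - 1)
      = real k + (l - u) * real (zero_trace_count a) + (u * (real n / real q) - u)" if "a \<noteq> 0" for a
  proof -
    have "F1.hyperplane_sum (F1.convolution (indicator C0) (indicator C0)) a
        = (real k - u) + (l - u) * real (zero_trace_count a) + u * (real n / real q)"
      unfolding conv F1.hyperplane_sum_linear3 F1.hyperplane_sum_delta hyperplane_sum_indicator_C0 F1.hyperplane_sum_1
      using that card_UNIV by simp
    moreover have "F1.hyperplane_sum (F1.convolution (indicator C0) (indicator C0)) a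
        = real (zero_trace_count a)^2 + (real k - real (zero_trace_count a))^2 / (real q - 1)"
      using F1.hyperplane_sum_convolution[OF scale_invariant_indicator_C0 scale_invariant_indicator_C0, of a]
      by (simp add: hyperplane_sum_indicator_C0 sum_indicator_C0 power2_eq_square)
    ultimately show ?thesis by simp
  qed
  then show ?thesis by (rule that)
qed

lemma zero_trace_count_two_values:
  assumes "a \<noteq> 0" "b \<noteq> 0" "c \<noteq> 0" "zero_trace_count a \<noteq> zero_trace_count b"
  shows "zero_trace_count c = zero_trace_count a \<or> zero_trace_count c = zero_trace_count b"
proof -
  obtain L U where quadratic: "\<And>a. a \<noteq> 0 \<Longrightarrow> real (zero_trace_count a)^2
      + (real k - real (zero_trace_count a))^2 / (real q - 1) = real k + L * real (zero_trace_count a) + U"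
    using zero_trace_count_quadratic by blast
  define Q where "Q = real q - 1"
  have "Q > 0" using q_ge_2 by (simp add: Q_def)
  have root: "(Q + 1) * t^2 + (- (2 * real k + Q * L)) * t + (real k ^ 2 - Q * (real k + U)) = 0"
    if "t^2 + (real k - t)^2 / Q = real k + L * t + U" for t
  proof -
    have "Q * t^2 + (real k - t)^2 = Q * (real k + L * t + U)"
      using that \<open>Q > 0\<close> by (simp add: field_simps)
    then show ?thesis by (simp add: power2_eq_square algebra_simps)
  qed
  note roots = root[OF quadratic[folded Q_def]]
  have "Q + 1 \<noteq> 0" using \<open>Q > 0\<close> by simp
  from quadratic_roots_cases[OF this roots[OF assms(1)] roots[OF assms(2)] roots[OF assms(3)]]
  show ?thesis using assms(4) by simp
qed

lemma zero_trace_count_nonconstant: "\<exists>a. a \<noteq> 0 \<and> zero_trace_count a \<noteq> zero_trace_count 1"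
proof (rule ccontr)
  assume "\<not> ?thesis"
  then have "x \<in> C0" if "x \<noteq> 0" for x
    using C0_eq_nonzero_if_zero_trace_count_constant[of "zero_trace_count 1"] that by blast
  moreover obtain x y :: 'a where "x \<noteq> y" "x - y \<notin> C0" using srg_C0_parameters by metis
  ultimately show False by simp
qed

abbreviation "h0 \<equiv> zero_trace_count 1"

definition h1 :: nat where
  "h1 = zero_trace_count (SOME a. a \<noteq> 0 \<and> zero_trace_count a \<noteq> h0)"

lemma h1: "\<exists>a. a \<noteq> 0 \<and> zero_trace_count a = h1" and h1_ne_h0: "h1 \<noteq> h0"
  using someI_ex[OF zero_trace_count_nonconstant] unfolding h1_def by auto

lemma zero_trace_count_cases: "a \<noteq> 0 \<Longrightarrow> zero_trace_count a = h0 \<or> zero_trace_count a = h1"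
  using zero_trace_count_two_values h1 h1_ne_h0 by (metis one_neq_zero)

definition D :: "'a set" where
  "D = {a. a \<noteq> 0 \<and> zero_trace_count a = h1}"

abbreviation "r \<equiv> card D"

lemma zero_notin_D [simp]: "0 \<notin> D"
  by (simp add: D_def)

lemma mult_C0_in_D_iff: "c \<in> C0 \<Longrightarrow> c * a \<in> D \<longleftrightarrow> a \<in> D"
  using zero_trace_count_mult_C0 C0_ne_0 by (auto simp: D_def)

lemma zero_trace_count_eq:
  "a \<noteq> 0 \<Longrightarrow> real (zero_trace_count a) = real h0 + (real h1 - real h0) * of_bool (a \<in> D)"
  using zero_trace_count_cases[of a] by (auto simp: D_def)

lemma card_D: "real r * (real h1 - real h0) = real k * (real n / real q - 1) - (real n - 1) * real h0"
proof -
  have "(\<Sum>a\<in>UNIV - {0}. real (zero_trace_count a)) = (\<Sum>a\<in>UNIV - {0}. real h0 + (real h1 - real h0) * of_bool (a \<in> D))"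
    by (rule sum.cong[OF refl]) (use zero_trace_count_eq in blast)
  also have "\<dots> = (real n - 1) * real h0 + (real h1 - real h0) * real r"
  proof -
    have "(UNIV - {0}) \<inter> {a. a \<in> D} = D" by auto
    then show ?thesis using card_UNIV n_gt_3
      by (simp add: sum.distrib sum_distrib_left[symmetric] card_Diff_singleton of_nat_diff)
  qed
  moreover have "(\<Sum>a\<in>UNIV. real (zero_trace_count a))
      = real (zero_trace_count 0) + (\<Sum>a\<in>UNIV - {0}. real (zero_trace_count a))"
    by (simp add: sum.remove)
  ultimately show ?thesis using sum_zero_trace_count zero_trace_count_0 by (simp add: algebra_simps)
qed

end

section \<open>Hyperplane sums of the indicator of \<open>H\<close>\<close>

lemma card_nonzero_Collect:
  "real (card {d. d \<noteq> 0 \<and> P d}) = real (card {d. P d}) - of_bool (P (0 :: 'a::{zero,finite}))"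
proof -
  have "{d. P d} = (if P 0 then insert 0 {d. d \<noteq> 0 \<and> P d} else {d. d \<noteq> 0 \<and> P d})" by auto
  then show ?thesis by simp
qed

lemma sum_UNIV_pair: "(\<Sum>v\<in>UNIV. g v) = (\<Sum>y\<in>UNIV. \<Sum>z\<in>UNIV. g (y, z) :: real)"
  by (simp add: sum.cartesian_product flip: UNIV_Times_UNIV)

context cyclotomic_class
begin

lemma card_trace_level_pair:
  assumes x: "x \<noteq> 0" and e: "e \<noteq> 0" and t: "t \<in> K"
  shows "real (card {d. Tr (d * x) = 0 \<and> Tr (d * e) = t}) =
    (if \<exists>l\<in>K. e = l * x then of_bool (t = 0) * (real n / real q) else real n / real q ^ 2)"
proof (cases "\<exists>l\<in>K. e = l * x")
  case True
  then obtain l where "l \<in> K" "e = l * x" by blast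
  then have "Tr (d * e) = l * Tr (d * x)" for d using Tr_mult_K[of l "d * x"] by (simp add: mult_ac)
  then have "{d. Tr (d * x) = 0 \<and> Tr (d * e) = t} = (if t = 0 then {d. Tr (d * x) = 0} else {})" by auto
  then show ?thesis using True F1.card_level_set_real[OF x zero_in_K] card_UNIV by simp
next
  case False
  have "\<not> (\<exists>l\<in>K. x = l * e)"
  proof
    assume "\<exists>l\<in>K. x = l * e"
    then obtain l where l: "l \<in> K" "x = l * e" by blast
    then have "e = inverse l * x" using x by auto
    then show False using False inverse_in_K l by blast
  qed
  then have "card {d. Tr (d * x) = 0 \<and> Tr (d * e) = t} * q^2 = card (UNIV :: 'a set)"
    using F1.card_level_set2[OF False _ t zero_in_K] by (simp add: conj_commute)
  then show ?thesis using False q_ge_2 card_UNIV by (simp add: field_simps flip: of_nat_mult of_nat_power)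
qed

lemma card_C0_on_line:
  assumes e: "e \<noteq> 0"
  shows "card {x \<in> C0. \<exists>l\<in>K. e = l * x} = (if e \<in> C0 then q - 1 else 0)"
proof (cases "e \<in> C0")
  case True
  have "{x \<in> C0. \<exists>l\<in>K. e = l * x} = (\<lambda>l. e / l) ` (K - {0})"
  proof (rule set_eqI, rule iffI)
    fix x assume "x \<in> {x \<in> C0. \<exists>l\<in>K. e = l * x}"
    then obtain l where l: "x \<in> C0" "l \<in> K" "e = l * x" by blast
    then have "l \<noteq> 0" "x = e / l" using e by auto
    then show "x \<in> (\<lambda>l. e / l) ` (K - {0})" using l by blast
  next
    fix x assume "x \<in> (\<lambda>l. e / l) ` (K - {0})"
    then obtain l where l: "l \<in> K" "l \<noteq> 0" "x = e / l" by blast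
    then have "x \<in> C0" using True K_subset_C0 inverse_in_C0 mult_in_C0 by (simp add: divide_inverse)
    moreover have "e = l * x" using l by simp
    ultimately show "x \<in> {x \<in> C0. \<exists>l\<in>K. e = l * x}" using l by blast
  qed
  moreover have "inj_on (\<lambda>l. e / l) (K - {0})" using e by (auto simp: inj_on_def field_simps)
  ultimately show ?thesis using True card_K zero_in_K by (simp add: card_image)
next
  case False
  then have "{x \<in> C0. \<exists>l\<in>K. e = l * x} = {}"
    using e K_subset_C0 mult_in_C0 by fastforce
  then show ?thesis using False by simp
qed

text \<open>Double counting of the pairs \<open>(x, d)\<close> with \<open>x \<in> C\<^sub>0\<close>, \<open>Tr(x d) = 0\<close> and \<open>Tr(d e) = t\<close>.\<close>

lemma sum_zero_trace_count_on_level: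
  assumes e: "e \<noteq> 0" and t: "t \<in> K"
  shows "(\<Sum>d | d \<noteq> 0 \<and> Tr (d * e) = t. real (zero_trace_count d))
    = real k * (real n / real q ^ 2 - of_bool (t = 0))
      + real (if e \<in> C0 then q - 1 else 0) * (of_bool (t = 0) * (real n / real q) - real n / real q ^ 2)"
proof -
  define S where "S = {d. d \<noteq> 0 \<and> Tr (d * e) = t}"
  define on_line where "on_line x \<longleftrightarrow> (\<exists>l\<in>K. e = l * x)" for x
  define c where "c = of_bool (t = 0) * (real n / real q) - real n / real q ^ 2"
  have "(\<Sum>d\<in>S. zero_trace_count d) = (\<Sum>d\<in>S. \<Sum>x\<in>{x \<in> C0. Tr (x * d) = 0}. 1)"
    by (simp add: zero_trace_count_def)
  also have "\<dots> = (\<Sum>x\<in>C0. \<Sum>d\<in>{d \<in> S. Tr (x * d) = 0}. 1)"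
    by (rule sum.swap_restrict) simp_all
  finally have "(\<Sum>d\<in>S. real (zero_trace_count d)) = (\<Sum>x\<in>C0. real (card {d \<in> S. Tr (x * d) = 0}))"
    by (metis (no_types, lifting) card_eq_sum of_nat_sum sum.cong)
  also have "\<dots> = (\<Sum>x\<in>C0. (real n / real q ^ 2 - of_bool (t = 0)) + of_bool (on_line x) * c)"
  proof (rule sum.cong[OF refl])
    fix x assume "x \<in> C0"
    have "{d \<in> S. Tr (x * d) = 0} = {d. d \<noteq> 0 \<and> (Tr (d * x) = 0 \<and> Tr (d * e) = t)}"
      by (auto simp: S_def mult.commute)
    then show "real (card {d \<in> S. Tr (x * d) = 0}) = (real n / real q ^ 2 - of_bool (t = 0)) + of_bool (on_line x) * c"
      using card_trace_level_pair[OF C0_ne_0[OF \<open>x \<in> C0\<close>] e t]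
      by (simp only: card_nonzero_Collect) (auto simp: on_line_def c_def)
  qed
  also have "\<dots> = real k * (real n / real q ^ 2 - of_bool (t = 0)) + real (card {x \<in> C0. on_line x}) * c"
    by (simp add: sum.distrib Int_def flip: sum_distrib_right)
  finally show ?thesis
    using card_C0_on_line[OF e] by (simp add: S_def on_line_def c_def)
qed

end

text \<open>
  The first-moment identity for \<open>r\<close> eliminates \<open>k\<close> and the two zero-trace counts from the
  hyperplane sums of the indicator of \<open>H\<close>.
\<close>

lemma eliminate_zero_trace_counts:
  fixes q n k h0 hc d \<Phi> r \<delta> :: real
  assumes "q \<noteq> 0" "d \<noteq> 0"
    and r: "r * d = k * (n / q - 1) - (n - 1) * h0"
    and \<Phi>: "d * \<Phi> = (k * (n / q ^ 2) - h0 * (n / q)) * (n - 1) + (h0 - k) * (n / q - 1)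
      + (q - 1) * (n / q) * hc - (q - 1) * (n / q ^ 2) * k"
    and hc: "hc = h0 + d * \<delta>"
  shows "q * \<Phi> = (n - 1) * r + (q - 1) * (n * \<delta> - r)"
proof -
  have "d * (q * \<Phi>) = (n - 1) * (r * d) + (q - 1) * (n * (hc - h0) - r * d)"
    unfolding r mult.left_commute[of d q] \<Phi> using \<open>q \<noteq> 0\<close>
    by (simp add: field_simps power2_eq_square)
  then have "d * (q * \<Phi>) = d * ((n - 1) * r + (q - 1) * (n * \<delta> - r))"
    unfolding hc by (simp add: algebra_simps)
  then show ?thesis using \<open>d \<noteq> 0\<close> by simp
qed

context srg_cyclotomic_class
begin

lemma card_D_on_level:
  assumes e: "e \<noteq> 0" and t: "t \<in> K"
  shows "(real h1 - real h0) * real (card {d \<in> D. Tr (d * e) = t})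
    = real k * (real n / real q ^ 2 - of_bool (t = 0)) - real h0 * (real n / real q - of_bool (t = 0))
      + real (if e \<in> C0 then q - 1 else 0) * (of_bool (t = 0) * (real n / real q) - real n / real q ^ 2)"
proof -
  define S where "S = {d. d \<noteq> 0 \<and> Tr (d * e) = t}"
  have "real (card S) = real n / real q - of_bool (t = 0)"
    unfolding S_def card_nonzero_Collect using F1.card_level_set_real[OF e t] card_UNIV by simp
  moreover have "S \<inter> {d. d \<in> D} = {d \<in> D. Tr (d * e) = t}" by (auto simp: S_def D_def)
  moreover have "(\<Sum>d\<in>S. real (zero_trace_count d)) = (\<Sum>d\<in>S. real h0 + (real h1 - real h0) * of_bool (d \<in> D))"
    by (rule sum.cong[OF refl], rule zero_trace_count_eq) (simp add: S_def)
  ultimately have "(\<Sum>d\<in>S. real (zero_trace_count d))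
      = real h0 * (real n / real q - of_bool (t = 0)) + (real h1 - real h0) * real (card {d \<in> D. Tr (d * e) = t})"
    by (simp add: sum.distrib flip: sum_distrib_left)
  then show ?thesis
    using sum_zero_trace_count_on_level[OF e t] unfolding S_def by simp
qed

definition H :: "('a \<times> 'a) set" where
  "H = {(y, z). y * z \<in> D}"

lemma indicator_H: "indicator H (y, z) = of_bool (y * z \<in> D)"
  by (simp add: H_def indicator_def)

lemma scale_invariant_indicator_H: "F2.scale_invariant (indicator H)"
  unfolding F2.scale_invariant_def
proof (intro ballI allI)
  fix a :: 'a and v :: "'a \<times> 'a" assume "a \<in> K - {0}"
  then have "a * a \<in> C0" using K_subset_C0 mult_in_C0 by blast
  obtain y z where v: "v = (y, z)" by (cases v)
  have eq: "a * y * (a * z) = a * a * (y * z)" by (simp add: mult_ac)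
  show "indicator H (case v of (y, z) \<Rightarrow> (a * y, a * z)) = indicator H v"
    by (simp only: v prod.case indicator_H eq mult_C0_in_D_iff[OF \<open>a * a \<in> C0\<close>])
qed

lemma hyperplane_sum_indicator_H_eq:
  "F2.hyperplane_sum (indicator H) (\<alpha>, \<beta>) = (\<Sum>y\<in>UNIV. real (card {z. y * z \<in> D \<and> Tr (y * \<alpha> + z * \<beta>) = 0}))"
  unfolding F2.hyperplane_sum_def by (subst sum_UNIV_pair) (simp add: indicator_H Int_def)

lemma card_row_H:
  assumes "y \<noteq> 0"
  shows "card {z. y * z \<in> D \<and> P z} = card {d \<in> D. P (d / y)}"
proof (rule bij_betw_same_card, rule bij_betw_byWitness[of _ "\<lambda>d. d / y"])
  show "\<forall>z\<in>{z. y * z \<in> D \<and> P z}. y * z / y = z" "\<forall>d\<in>{d \<in> D. P (d / y)}. y * (d / y) = d"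
    using assms by simp_all
  show "(\<lambda>z. y * z) ` {z. y * z \<in> D \<and> P z} \<subseteq> {d \<in> D. P (d / y)}"
    using assms by auto
  show "(\<lambda>d. d / y) ` {d \<in> D. P (d / y)} \<subseteq> {z. y * z \<in> D \<and> P z}"
    using assms by auto
qed

lemma card_row_H_nonzero: "y \<noteq> 0 \<Longrightarrow> card {z. y * z \<in> D} = r"
  using card_row_H[of y "\<lambda>_. True"] by simp

lemma hyperplane_sum_indicator_H_0: "F2.hyperplane_sum (indicator H) 0 = (real n - 1) * real r"
proof -
  have "F2.hyperplane_sum (indicator H) 0 = (\<Sum>y\<in>UNIV. real (card {z. y * z \<in> D}))"
    using hyperplane_sum_indicator_H_eq[of 0 0] by (simp add: zero_prod_def)
  also have "\<dots> = (\<Sum>y\<in>UNIV. of_bool (y \<noteq> (0::'a)) * real r)"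
    by (rule sum.cong[OF refl]) (simp add: card_row_H_nonzero)
  also have "\<dots> = real (card (UNIV - {0 :: 'a})) * real r"
    by (simp add: Int_def Collect_neg_eq Compl_eq_Diff_UNIV)
  finally show ?thesis using card_UNIV n_gt_3 by (simp add: card_Diff_singleton of_nat_diff)
qed

lemma card_nonzero_trace_zero:
  "\<alpha> \<noteq> 0 \<Longrightarrow> real (card {y. y \<noteq> 0 \<and> Tr (y * \<alpha>) = 0}) = real n / real q - 1"
  unfolding card_nonzero_Collect using F1.card_level_set_real[OF _ zero_in_K, of \<alpha>] card_UNIV by simp

lemma hyperplane_sum_indicator_H_swap:
  "F2.hyperplane_sum (indicator H) (\<alpha>, \<beta>) = F2.hyperplane_sum (indicator H) (\<beta>, \<alpha>)"
  unfolding F2.hyperplane_sum_def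
  by (rule sum.reindex_bij_witness[of _ prod.swap prod.swap]) (auto simp: indicator_H mult.commute add.commute)

lemma hyperplane_sum_indicator_H_axis:
  assumes "\<alpha> \<noteq> 0"
  shows "F2.hyperplane_sum (indicator H) (\<alpha>, 0) = real r * (real n / real q - 1)"
proof -
  have "F2.hyperplane_sum (indicator H) (\<alpha>, 0) = (\<Sum>y\<in>UNIV. of_bool (y \<noteq> 0 \<and> Tr (y * \<alpha>) = 0) * real r)"
    unfolding hyperplane_sum_indicator_H_eq
  proof (rule sum.cong[OF refl])
    fix y
    show "real (card {z. y * z \<in> D \<and> Tr (y * \<alpha> + z * 0) = 0}) = of_bool (y \<noteq> 0 \<and> Tr (y * \<alpha>) = 0) * real r"
      using card_row_H_nonzero[of y] by (cases "y = 0") auto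
  qed
  then show ?thesis using card_nonzero_trace_zero[OF assms] by (simp add: Int_def)
qed

lemma card_quotient_in_C0:
  assumes "\<beta> \<noteq> 0"
  shows "card {y. y \<noteq> 0 \<and> \<beta> / y \<in> C0 \<and> P y} = card {x \<in> C0. P (\<beta> * x)}"
proof (rule bij_betw_same_card[of "\<lambda>x. \<beta> * x", symmetric])
  have "y \<in> (\<lambda>x. \<beta> * x) ` {x \<in> C0. P (\<beta> * x)}" if "y \<noteq> 0" "\<beta> / y \<in> C0" "P y" for y
  proof
    show "y = \<beta> * (y / \<beta>)" using assms by simp
    show "y / \<beta> \<in> {x \<in> C0. P (\<beta> * x)}" using that assms inverse_in_C0[of "\<beta> / y"] by simp
  qed
  then show "bij_betw (\<lambda>x. \<beta> * x) {x \<in> C0. P (\<beta> * x)} {y. y \<noteq> 0 \<and> \<beta> / y \<in> C0 \<and> P y}"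
    using assms inverse_in_C0 by (auto simp: bij_betw_def inj_on_def inverse_eq_divide)
qed

lemma card_row_H_on_hyperplane:
  fixes \<alpha> \<beta> y :: 'a
  assumes y: "y \<noteq> 0" and \<beta>: "\<beta> \<noteq> 0"
  defines "T \<equiv> of_bool (Tr (y * \<alpha>) = 0) :: real" and "E \<equiv> of_bool (\<beta> / y \<in> C0) :: real"
  shows "(real h1 - real h0) * real (card {z. y * z \<in> D \<and> Tr (y * \<alpha> + z * \<beta>) = 0})
    = (real k * (real n / real q ^ 2) - real h0 * (real n / real q)) + (real h0 - real k) * T
      + (real q - 1) * (real n / real q) * (E * T) - (real q - 1) * (real n / real q ^ 2) * E"
proof -
  have "Tr (y * \<alpha> + d / y * \<beta>) = 0 \<longleftrightarrow> Tr (d * (\<beta> / y)) = - Tr (y * \<alpha>)" for d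
    using Tr_add[of "y * \<alpha>" "d / y * \<beta>"] by (auto simp: eq_neg_iff_add_eq_0 add.commute)
  then have "card {z. y * z \<in> D \<and> Tr (y * \<alpha> + z * \<beta>) = 0} = card {d \<in> D. Tr (d * (\<beta> / y)) = - Tr (y * \<alpha>)}"
    using card_row_H[OF y] by simp
  moreover have "real (if \<beta> / y \<in> C0 then q - 1 else 0) = (real q - 1) * E"
    using q_ge_2 by (simp add: E_def of_nat_diff)
  moreover have "of_bool (- Tr (y * \<alpha>) = 0) = T" by (simp add: T_def)
  ultimately have "(real h1 - real h0) * real (card {z. y * z \<in> D \<and> Tr (y * \<alpha> + z * \<beta>) = 0})
      = real k * (real n / real q ^ 2 - T) - real h0 * (real n / real q - T)
        + ((real q - 1) * E) * (T * (real n / real q) - real n / real q ^ 2)"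
    using card_D_on_level[of "\<beta> / y" "- Tr (y * \<alpha>)"] y \<beta> Tr_in_K uminus_in_K by simp
  also have "k' * (B - T) - h * (A - T) + (Q * E) * (T * A - B)
      = (k' * B - h * A) + (h - k') * T + Q * A * (E * T) - Q * B * E" for k' h A B T E Q :: real
    by (simp add: algebra_simps)
  finally show ?thesis .
qed

lemma hyperplane_sum_indicator_H_generic:
  assumes \<alpha>: "\<alpha> \<noteq> 0" and \<beta>: "\<beta> \<noteq> 0"
  shows "(real h1 - real h0) * F2.hyperplane_sum (indicator H) (\<alpha>, \<beta>)
    = (real k * (real n / real q ^ 2) - real h0 * (real n / real q)) * (real n - 1)
      + (real h0 - real k) * (real n / real q - 1)
      + (real q - 1) * (real n / real q) * real (zero_trace_count (\<alpha> * \<beta>))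
      - (real q - 1) * (real n / real q ^ 2) * real k"
proof -
  define on_hyperplane where "on_hyperplane y = (of_bool (Tr (y * \<alpha>) = 0) :: real)" for y
  define in_C0 where "in_C0 y = (of_bool (\<beta> / y \<in> C0) :: real)" for y
  note row = card_row_H_on_hyperplane[OF _ \<beta>, of _ \<alpha>, folded on_hyperplane_def in_C0_def]
  have sums: "(\<Sum>y | y \<noteq> (0::'a). 1) = real n - 1"
    "(\<Sum>y | y \<noteq> 0. on_hyperplane y) = real n / real q - 1"
    "(\<Sum>y | y \<noteq> 0. in_C0 y) = real k"
    "(\<Sum>y | y \<noteq> 0. in_C0 y * on_hyperplane y) = real (zero_trace_count (\<alpha> * \<beta>))"
  proof -
    have "{y :: 'a. y \<noteq> 0} = UNIV - {0}" by auto
    then have "card {y :: 'a. y \<noteq> 0} = n - 1" using card_UNIV by (simp add: card_Diff_singleton)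
    then show "(\<Sum>y | y \<noteq> (0::'a). 1) = real n - 1" using n_gt_3 by (simp add: of_nat_diff)
    show "(\<Sum>y | y \<noteq> 0. on_hyperplane y) = real n / real q - 1"
      using card_nonzero_trace_zero[OF \<alpha>] by (simp add: on_hyperplane_def Int_def conj_commute)
    show "(\<Sum>y | y \<noteq> 0. in_C0 y) = real k"
      using card_quotient_in_C0[OF \<beta>, of "\<lambda>_. True"] by (simp add: in_C0_def Int_def)
    show "(\<Sum>y | y \<noteq> 0. in_C0 y * on_hyperplane y) = real (zero_trace_count (\<alpha> * \<beta>))"
      using card_quotient_in_C0[OF \<beta>, of "\<lambda>y. Tr (y * \<alpha>) = 0"]
      by (simp add: in_C0_def on_hyperplane_def zero_trace_count_def Int_def mult_ac conj_commute conj_left_commute)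
  qed
  have "(real h1 - real h0) * F2.hyperplane_sum (indicator H) (\<alpha>, \<beta>)
      = (\<Sum>y | y \<noteq> 0. (real h1 - real h0) * real (card {z. y * z \<in> D \<and> Tr (y * \<alpha> + z * \<beta>) = 0}))"
    unfolding hyperplane_sum_indicator_H_eq sum_distrib_left
    by (rule sum.mono_neutral_cong_right) auto
  also have "\<dots> = (\<Sum>y | y \<noteq> 0. (real k * (real n / real q ^ 2) - real h0 * (real n / real q))
        + (real h0 - real k) * on_hyperplane y + (real q - 1) * (real n / real q) * (in_C0 y * on_hyperplane y)
        - (real q - 1) * (real n / real q ^ 2) * in_C0 y)"
    by (rule sum.cong) (simp_all add: row)
  also have "\<dots> = (real k * (real n / real q ^ 2) - real h0 * (real n / real q)) * (\<Sum>y | y \<noteq> (0::'a). 1)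
      + (real h0 - real k) * (\<Sum>y | y \<noteq> 0. on_hyperplane y)
      + (real q - 1) * (real n / real q) * (\<Sum>y | y \<noteq> 0. in_C0 y * on_hyperplane y)
      - (real q - 1) * (real n / real q ^ 2) * (\<Sum>y | y \<noteq> 0. in_C0 y)"
    by (simp add: sum.distrib sum_subtractf sum_distrib_left)
  finally show ?thesis unfolding sums by (simp add: mult.commute)
qed

lemma hyperplane_sum_indicator_H:
  assumes "w \<noteq> 0"
  shows "real q * F2.hyperplane_sum (indicator H) w
    = (real n - 1) * real r + (real q - 1) * (real n * of_bool (fst w * snd w \<in> D) - real r)"
proof -
  obtain \<alpha> \<beta> where w: "w = (\<alpha>, \<beta>)" by (cases w)
  have q: "real q \<noteq> 0" using q_ge_2 by simp
  show ?thesis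
  proof (cases "\<alpha> = 0 \<or> \<beta> = 0")
    case True
    then have "F2.hyperplane_sum (indicator H) w = real r * (real n / real q - 1)"
    proof
      assume "\<alpha> = 0"
      then have "\<beta> \<noteq> 0" using assms w by (simp add: zero_prod_def)
      then show ?thesis
        using w \<open>\<alpha> = 0\<close> hyperplane_sum_indicator_H_swap[of 0 \<beta>] hyperplane_sum_indicator_H_axis by simp
    next
      assume "\<beta> = 0"
      then have "\<alpha> \<noteq> 0" using assms w by (simp add: zero_prod_def)
      then show ?thesis using w \<open>\<beta> = 0\<close> hyperplane_sum_indicator_H_axis by simp
    qed
    then show ?thesis using True q w by (auto simp: field_simps)
  next
    case False
    then have "real (zero_trace_count (\<alpha> * \<beta>)) = real h0 + (real h1 - real h0) * of_bool (\<alpha> * \<beta> \<in> D)"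
      by (intro zero_trace_count_eq) simp
    with eliminate_zero_trace_counts[OF q _ card_D hyperplane_sum_indicator_H_generic] False h1_ne_h0 w
    show ?thesis by simp
  qed
qed

end

section \<open>The strongly regular graph \<open>Cay(F \<times> F, H)\<close>\<close>

text \<open>The two possible values of \<open>\<theta>\<close> are the roots of \<open>\<theta>\<^sup>2 = (n - 2 r) \<theta> + r (n - r)\<close>.\<close>

lemma srg_parameter_identity:
  fixes q n r \<Phi> \<theta> :: real
  assumes q: "q > 1" and \<Phi>: "q * \<Phi> = (n - 1) * r + (q - 1) * \<theta>" and \<theta>: "\<theta> = n - r \<or> \<theta> = - r"
  shows "\<Phi> * \<Phi> + ((n - 1) * r - \<Phi>) * ((n - 1) * r - \<Phi>) / (q - 1) =
    ((n - 1) * r - (r^2 - r)) * 1 + ((n + r^2 - 3 * r) - (r^2 - r)) * \<Phi> + (r^2 - r) * (n * n / q)"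
proof -
  define R where "R = (n - 1) * r"
  have \<Phi>_eq: "\<Phi> = (R + (q - 1) * \<theta>) / q" using \<Phi> q by (simp add: R_def field_simps)
  have \<theta>_sq: "\<theta> * \<theta> = (n - 2 * r) * \<theta> + r * (n - r)" using \<theta> by (auto simp: algebra_simps)
  have "q - 1 \<noteq> 0" "q \<noteq> 0" using q by auto
  then have "q * q * (q - 1) * (\<Phi> * \<Phi> + (R - \<Phi>) * (R - \<Phi>) / (q - 1)) = q * (q - 1) * (R * R + (q - 1) * (\<theta> * \<theta>))"
    unfolding \<Phi>_eq by (simp add: field_simps; simp add: algebra_simps power2_eq_square)
  also have "\<dots> = q * q * (q - 1) * ((R - (r^2 - r)) * 1 + ((n + r^2 - 3 * r) - (r^2 - r)) * \<Phi> + (r^2 - r) * (n * n / q))"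
    unfolding \<theta>_sq \<Phi>_eq R_def using \<open>q - 1 \<noteq> 0\<close> \<open>q \<noteq> 0\<close>
    by (simp add: field_simps; simp add: algebra_simps power2_eq_square)
  finally show ?thesis unfolding R_def using \<open>q - 1 \<noteq> 0\<close> \<open>q \<noteq> 0\<close> by simp
qed

context srg_cyclotomic_class
begin

lemma sum_indicator_H: "sum (indicator H) UNIV = (real n - 1) * real r"
  using F2.hyperplane_sum_at_0 hyperplane_sum_indicator_H_0 by simp

lemma card_UNIV_pairs: "real (card (UNIV :: ('a \<times> 'a) set)) = real n * real n"
  using card_UNIV by (simp add: card_cartesian_product flip: UNIV_Times_UNIV)

lemma convolution_indicator_H:
  "F2.convolution (indicator H) (indicator H) v
    = ((real n - 1) * real r - (real r ^ 2 - real r)) * of_bool (v = 0)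
      + ((real n + real r ^ 2 - 3 * real r) - (real r ^ 2 - real r)) * indicator H v + (real r ^ 2 - real r) * 1"
proof (rule F2.scale_invariant_hyperplane_sum_inject)
  show "F2.scale_invariant (F2.convolution (indicator H) (indicator H))"
    by (intro F2.scale_invariant_convolution scale_invariant_indicator_H)
  show "F2.scale_invariant (\<lambda>v. ((real n - 1) * real r - (real r ^ 2 - real r)) * of_bool (v = 0)
      + ((real n + real r ^ 2 - 3 * real r) - (real r ^ 2 - real r)) * indicator H v + (real r ^ 2 - real r) * 1)"
    by (intro F2.scale_invariant_add F2.scale_invariant_cmult F2.scale_invariant_delta
        scale_invariant_indicator_H F2.scale_invariant_const)
  fix w
  define \<Phi> where "\<Phi> = F2.hyperplane_sum (indicator H) w"
  have "F2.hyperplane_sum (F2.convolution (indicator H) (indicator H)) w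
      = \<Phi> * \<Phi> + ((real n - 1) * real r - \<Phi>) * ((real n - 1) * real r - \<Phi>) / (real q - 1)"
    using F2.hyperplane_sum_convolution[OF scale_invariant_indicator_H scale_invariant_indicator_H, of w]
    by (simp add: sum_indicator_H \<Phi>_def)
  also have "\<dots> = ((real n - 1) * real r - (real r ^ 2 - real r)) * 1
      + ((real n + real r ^ 2 - 3 * real r) - (real r ^ 2 - real r)) * \<Phi>
      + (real r ^ 2 - real r) * F2.hyperplane_sum (\<lambda>v. 1) w"
  proof (cases "w = 0")
    case True
    then show ?thesis
      by (simp add: \<Phi>_def hyperplane_sum_indicator_H_0 F2.hyperplane_sum_1 card_UNIV_pairs
          algebra_simps power2_eq_square)
  next
    case False
    have "real q > 1" using q_ge_2 by simp
    moreover have "real q * \<Phi> = (real n - 1) * real r + (real q - 1) * (real n * of_bool (fst w * snd w \<in> D) - real r)"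
      using hyperplane_sum_indicator_H[OF False] by (simp add: \<Phi>_def)
    ultimately show ?thesis
      using srg_parameter_identity False by (simp add: F2.hyperplane_sum_1 card_UNIV_pairs)
  qed
  finally show "F2.hyperplane_sum (F2.convolution (indicator H) (indicator H)) w
    = F2.hyperplane_sum (\<lambda>v. ((real n - 1) * real r - (real r ^ 2 - real r)) * of_bool (v = 0)
      + ((real n + real r ^ 2 - 3 * real r) - (real r ^ 2 - real r)) * indicator H v + (real r ^ 2 - real r) * 1) w"
    unfolding F2.hyperplane_sum_linear3 F2.hyperplane_sum_delta \<Phi>_def by simp
qed

lemma uminus_in_H_iff: "- v \<in> H \<longleftrightarrow> v \<in> H"
  by (cases v) (simp add: H_def)

lemma card_neighbours_H: "real (card {y. x - y \<in> H}) = (real n - 1) * real r"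
proof -
  have "real (card {y. x - y \<in> H}) = (\<Sum>y\<in>UNIV. indicator H (x - y))" by (simp add: indicator_def Int_def)
  also have "\<dots> = sum (indicator H) UNIV"
    by (rule sum.reindex_bij_witness[of _ "\<lambda>v. x - v" "\<lambda>y. x - y"]) auto
  finally show ?thesis using sum_indicator_H by simp
qed

lemma card_common_neighbours_H:
  "real (card {z. x - z \<in> H \<and> y - z \<in> H}) = F2.convolution (indicator H) (indicator H) (x - y)"
proof -
  have "real (card {z. x - z \<in> H \<and> y - z \<in> H}) = (\<Sum>z\<in>UNIV. indicator H (x - z) * indicator H (y - z))"
    by (simp add: indicator_def Int_def)
  also have "\<dots> = (\<Sum>v\<in>UNIV. indicator H v * indicator H (x - y - v))"
  proof (rule sum.reindex_bij_witness[of _ "\<lambda>v. x - v" "\<lambda>z. x - z"])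
    fix z
    have "x - y - (x - z) = - (y - z)" by (simp add: algebra_simps)
    moreover have "- (y - z) \<in> H \<longleftrightarrow> y - z \<in> H" by (rule uminus_in_H_iff)
    ultimately show "indicator H (x - z) * indicator H (x - y - (x - z)) = indicator H (x - z) * indicator H (y - z)"
      by (simp only: indicator_def)
  qed auto
  finally show ?thesis by (simp add: F2.convolution_def)
qed

lemma srg_H:
  "srg (UNIV :: ('a \<times> 'a) set) (cayley_adj H)
    (int n ^ 2) (int r * (int n - 1)) (int n + int r ^ 2 - 3 * int r) (int r ^ 2 - int r)"
  unfolding srg_def cayley_adj_def
proof (intro conjI ballI impI)
  have real_int_eq: "real c = real_of_int z \<Longrightarrow> int c = z" for c z
    by (metis of_int_eq_iff of_int_of_nat_eq)
  show "finite (UNIV :: ('a \<times> 'a) set)" by simp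
  fix x y :: "'a \<times> 'a"
  show "int (card (UNIV :: ('a \<times> 'a) set)) = int n ^ 2"
    by (rule real_int_eq) (simp add: card_UNIV_pairs power2_eq_square)
  show "x - y \<in> H \<Longrightarrow> y - x \<in> H" using uminus_in_H_iff[of "y - x"] by simp
  show "x - x \<notin> H" by (simp add: H_def zero_prod_def)
  show "int (card {y \<in> UNIV. x - y \<in> H}) = int r * (int n - 1)"
    by (rule real_int_eq) (simp add: card_neighbours_H mult.commute)
  show "int (card {z \<in> UNIV. x - z \<in> H \<and> y - z \<in> H}) = int n + int r ^ 2 - 3 * int r"
    if "x \<noteq> y \<and> x - y \<in> H"
    using that card_common_neighbours_H[of x y] convolution_indicator_H[of "x - y"]
    by (intro real_int_eq) (simp add: indicator_def)
  show "int (card {z \<in> UNIV. x - z \<in> H \<and> y - z \<in> H}) = int r ^ 2 - int r"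
    if "x \<noteq> y \<and> x - y \<notin> H"
    using that card_common_neighbours_H[of x y] convolution_indicator_H[of "x - y"]
    by (intro real_int_eq) (simp add: indicator_def)
next
  obtain a where "a \<noteq> 0" "zero_trace_count a = h1" using h1 by blast
  then have "(a, 1) - 0 \<in> H" "(a, 1) \<noteq> (0 :: 'a \<times> 'a)" by (simp_all add: H_def D_def zero_prod_def)
  then show "\<exists>x\<in>UNIV. \<exists>y\<in>UNIV. x \<noteq> y \<and> x - y \<in> H" by blast
next
  have "(0, 1) - 0 \<notin> H" by (simp add: H_def)
  moreover have "(0, 1) \<noteq> (0 :: 'a \<times> 'a)" by (simp add: zero_prod_def)
  ultimately show "\<exists>x\<in>UNIV. \<exists>y\<in>UNIV. x \<noteq> y \<and> x - y \<notin> H" by blast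
qed

end

section \<open>The subdifference set \<open>I\<close>\<close>

context cyclotomic_class
begin

lemma card_cyclo_C_trace_zero: "card {x \<in> cyclo_C N \<omega> i. trace_rel q m x = 0} = zero_trace_count (\<omega> ^ i)"
proof -
  have "{x \<in> cyclo_C N \<omega> i. trace_rel q m x = 0} = (\<lambda>x. \<omega> ^ i * x) ` {x \<in> C0. Tr (x * \<omega> ^ i) = 0}"
    unfolding cyclo_C_def Tr_eq by (auto simp: mult.commute)
  moreover have "inj_on (\<lambda>x. \<omega> ^ i * x) {x \<in> C0. Tr (x * \<omega> ^ i) = 0}"
    using omega_power_ne_0 by (auto simp: inj_on_def)
  ultimately show ?thesis by (simp add: card_image zero_trace_count_def)
qed

lemma sub_n_eq: "sub_n q m N \<omega> i = int (zero_trace_count (\<omega> ^ i) div (q - 1))"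
  unfolding sub_n_def card_cyclo_C_trace_zero ..

lemma zero_trace_count_div_eq_iff:
  "zero_trace_count a div (q - 1) = zero_trace_count b div (q - 1) \<longleftrightarrow> zero_trace_count a = zero_trace_count b"
  using zero_trace_count_dvd[of a] zero_trace_count_dvd[of b] by (metis dvd_div_mult_self)

end

context srg_cyclotomic_class
begin

lemma coset_in_D_iff: "c \<in> C0 \<Longrightarrow> \<omega> ^ j * c \<in> D \<longleftrightarrow> \<omega> ^ j \<in> D"
  using mult_C0_in_D_iff[of c "\<omega> ^ j"] by (simp add: mult.commute)

lemma subdiff_delta_eq: "subdiff_delta q m N \<omega> = int (h1 div (q - 1)) - int (h0 div (q - 1))"
  unfolding subdiff_delta_def
proof (rule the_equality)
  have sub_n_0: "sub_n q m N \<omega> 0 = int (h0 div (q - 1))" by (simp add: sub_n_eq)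
  obtain a where "a \<noteq> 0" "zero_trace_count a = h1" using h1 by blast
  moreover obtain j c where "j < N" "c \<in> C0" "a = \<omega> ^ j * c" using nonzero_in_coset[OF \<open>a \<noteq> 0\<close>] by blast
  ultimately have "j < N" "zero_trace_count (\<omega> ^ j) = h1"
    using zero_trace_count_mult_C0[of c "\<omega> ^ j"] by (simp_all add: mult.commute)
  then show "int (h1 div (q - 1)) - int (h0 div (q - 1)) \<noteq> 0 \<and>
      (\<exists>i<N. sub_n q m N \<omega> i - sub_n q m N \<omega> 0 = int (h1 div (q - 1)) - int (h0 div (q - 1)))"
    using h1_ne_h0 zero_trace_count_div_eq_iff[of "\<omega> ^ j" 1] sub_n_0 by (auto simp: sub_n_eq)
next
  fix d assume "d \<noteq> 0 \<and> (\<exists>i<N. sub_n q m N \<omega> i - sub_n q m N \<omega> 0 = d)"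
  then obtain i where "sub_n q m N \<omega> i - sub_n q m N \<omega> 0 = d" "d \<noteq> 0" by blast
  moreover have "zero_trace_count (\<omega> ^ i) = h0 \<or> zero_trace_count (\<omega> ^ i) = h1"
    using zero_trace_count_cases omega_power_ne_0 by blast
  ultimately show "d = int (h1 div (q - 1)) - int (h0 div (q - 1))" by (auto simp: sub_n_eq)
qed

lemma mem_subdiff_set_iff: "i \<in> subdiff_set q m N \<omega> \<longleftrightarrow> i < N \<and> \<omega> ^ i \<in> D"
proof -
  obtain a where "zero_trace_count a = h1" using h1 by blast
  then have "sub_n q m N \<omega> i - sub_n q m N \<omega> 0 = subdiff_delta q m N \<omega> \<longleftrightarrow> zero_trace_count (\<omega> ^ i) = h1"
    using zero_trace_count_div_eq_iff[of "\<omega> ^ i" a] by (simp add: sub_n_eq subdiff_delta_eq)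
  then show ?thesis by (simp add: subdiff_set_def D_def omega_ne_0)
qed

lemma mem_D_iff:
  "a \<in> D \<longleftrightarrow> (\<exists>l\<in>subdiff_set q m N \<omega>. \<exists>x\<in>C0. a = \<omega> ^ l * x)"
proof
  assume "a \<in> D"
  then obtain j c where "j < N" "c \<in> C0" "a = \<omega> ^ j * c" using nonzero_in_coset[of a] by (auto simp: D_def)
  then show "\<exists>l\<in>subdiff_set q m N \<omega>. \<exists>x\<in>C0. a = \<omega> ^ l * x"
    using \<open>a \<in> D\<close> coset_in_D_iff mem_subdiff_set_iff by blast
qed (auto simp: mem_subdiff_set_iff coset_in_D_iff)

lemma H_eq:
  "{(y, inverse y * x * \<omega> ^ l) | x y l. x \<in> C0 \<and> y \<noteq> 0 \<and> l \<in> subdiff_set q m N \<omega>} = H"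
proof (rule set_eqI, rule iffI)
  fix v assume "v \<in> {(y, inverse y * x * \<omega> ^ l) | x y l. x \<in> C0 \<and> y \<noteq> 0 \<and> l \<in> subdiff_set q m N \<omega>}"
  then obtain x y l where "v = (y, inverse y * x * \<omega> ^ l)" "x \<in> C0" "y \<noteq> 0" "l \<in> subdiff_set q m N \<omega>"
    by blast
  then show "v \<in> H" unfolding H_def mem_D_iff by (auto simp: field_simps)
next
  fix v assume "v \<in> H"
  then obtain y z l x where "v = (y, z)" "l \<in> subdiff_set q m N \<omega>" "x \<in> C0" "y * z = \<omega> ^ l * x"
    unfolding H_def mem_D_iff by auto
  moreover from this have "y \<noteq> 0" using C0_ne_0 omega_ne_0 by auto
  ultimately show "v \<in> {(y, inverse y * x * \<omega> ^ l) | x y l. x \<in> C0 \<and> y \<noteq> 0 \<and> l \<in> subdiff_set q m N \<omega>}"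
    by (auto simp: field_simps)
qed

lemma card_D_eq: "(q ^ m - 1) * card (subdiff_set q m N \<omega>) div N = r"
proof -
  let ?I = "subdiff_set q m N \<omega>"
  have "finite ?I" by (simp add: subdiff_set_def)
  have "D = (\<Union>l\<in>?I. (\<lambda>x. \<omega> ^ l * x) ` C0)" using mem_D_iff by blast
  also have "card \<dots> = (\<Sum>l\<in>?I. card ((\<lambda>x. \<omega> ^ l * x) ` C0))"
    using \<open>finite ?I\<close> coset_index_unique by (intro card_UN_disjoint) (auto simp: mem_subdiff_set_iff)
  also have "\<dots> = (\<Sum>l\<in>?I. k)"
    by (rule sum.cong[OF refl], rule card_image) (auto simp: inj_on_def omega_ne_0)
  moreover have "(q ^ m - 1) * card ?I div N = card ?I * k"
  proof -
    have "(q ^ m - 1) * card ?I = N * (card ?I * k)" using card_C0 by (metis mult.commute mult.left_commute)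
    then have "(q ^ m - 1) * card ?I div N = N * (card ?I * k) div N" by (simp only:)
    then show ?thesis using N_pos by simp
  qed
  ultimately show ?thesis by simp
qed

end

theorem proposition3p4:
  fixes p f q m N :: nat and \<omega> :: "'a::{field,finite}"
  assumes "prime p" and "f \<ge> 1" and "q = p ^ f" and "m \<ge> 2"
    and "card (UNIV :: 'a set) = q ^ m"
    and "primitive_elem \<omega>"
    and "N > 0" and "N dvd q ^ m - 1"
    and "Fq_star q \<subseteq> cyclo_C0 N \<omega>"
    and "is_srg (UNIV :: 'a set) (cayley_adj (cyclo_C0 N \<omega>))"
  defines "H \<equiv> {(y, inverse y * x * \<omega> ^ l) | x y l.
                 x \<in> cyclo_C0 N \<omega> \<and> y \<noteq> 0 \<and> l \<in> subdiff_set q m N \<omega>}"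
    and "n \<equiv> q ^ m"
    and "r \<equiv> (q ^ m - 1) * card (subdiff_set q m N \<omega>) div N"
  shows "srg (UNIV :: ('a \<times> 'a) set) (cayley_adj H)
           (int n ^ 2) (int r * (int n - 1)) (int n + int r ^ 2 - 3 * int r) (int r ^ 2 - int r)"
proof -
  interpret F: srg_cyclotomic_class p f q m "trace_rel q m" N \<omega>
    by unfold_locales (use assms in auto)
  show ?thesis
    unfolding H_def n_def r_def F.H_eq F.card_D_eq by (rule F.srg_H)
qed

end
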